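(* Let $(S,\mathcal C)$ be a connectoid and $T$ a normal tree of $(S,\mathcal C)$. For every end $\omega$ of the tree $T$, let $R_\omega$ be the unique ray in $\omega$ starting at the root of $T$. Then $V(R_\omega)$ converges to an end $\eta(\omega)\in\Omega(S,\mathcal C)$, and the map $\omega\mapsto\eta(\omega)$ is a bijection between the ends of $T$ and the ends of $(S,\mathcal C)$ lying in the closure of $V(T)$.
   Context: A connectoid is given by a set $S$ and a set $\mathcal F$ of finite subsets of $S$ such that (i) $F\cup F'\in\mathcal F$ whenever $F,F'\in\mathcal F$ and $F\cap F'\neq\emptyset$, and (ii) $\emptyset\in\mathcal F$ and $\{s\}\in\mathcal F$ for every $s\in S$. A set $C\subseteq S$ is connected if for all $x,y\in C$ there is $F\in\mathcal F$ with $F\subseteq C$ and $x,y\in F$; $\mathcal C$ is the set of connected sets. For $S'\subseteq S$, a component of $S'$ is a maximal connected subset, and $\mathcal K(S')$ is the set of components of $S'$. "Almost all" means all but finitely many. A necklace is a connected set $N$ for which there is a family $(H_n)_{n\in\mathbb N}$ of finite connected sets with $N=\bigcup_n H_n$ and $H_i\cap H_j\neq\emptyset$ iff $|i-j|\le 1$. For finite $X\subseteq S$, the $X$-tail of $N$ is the unique element of $\mathcal K(N\setminus X)$ containing almost all elements of $N$. Two necklaces are equivalent if for every finite $X\subseteq S$ their $X$-tails lie in the same element of $\mathcal K(S\setminus X)$. An end is an equivalence class of necklaces; $\Omega(S,\mathcal C)$ is the set of ends; $K(X,\omega)$ is the element of $\mathcal K(S\setminus X)$ containing the $X$-tails of the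 necklaces in $\omega$. An infinite set $Y\subseteq S$ converges to an end $\nu$ if $K(X,\nu)$ contains almost all elements of $Y$ for every finite $X\subseteq S$. An end $\nu$ lies in the closure of a set $U\subseteq S$ if $K(X,\nu)\cap U\neq\emptyset$ for every finite $X\subseteq S$. For a rooted tree $T$ with tree order $\le_T$ and $t\in V(T)$, let $\mathrm{Down}^\circ_T(t)=\{x\in V(T):x<_T t\}$. A weak normal tree of $(S,\mathcal C)$ is a rooted undirected tree $T$ with $V(T)\subseteq S$ such that (1) for every $C\in\mathcal C$ and every two $\le_T$-incomparable $u,v\in C\cap V(T)$ there is $w\in C$ with $w\le_T u$ and $w\le_T v$, and (2) for all $u\le_T v$ in $V(T)$ there is $C\in\mathcal C$ containing $u,v$ with $C\cap\mathrm{Down}^\circ_T(u)=\emptyset$. It is a normal tree if additionally for every rooted ray $R$ of $T$ some necklace contains almost all vertices of $R$. Ends of $T$ are its graph-theoretic ends (equivalence classes of rays). *)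

theory Defs
  imports Main
begin

definition connectoid :: "'a set \<Rightarrow> 'a set set \<Rightarrow> bool" where
  "connectoid S Fs \<longleftrightarrow>
     (\<forall>F\<in>Fs. finite F \<and> F \<subseteq> S) \<and>
     (\<forall>F\<in>Fs. \<forall>F'\<in>Fs. F \<inter> F' \<noteq> {} \<longrightarrow> F \<union> F' \<in> Fs) \<and>
     {} \<in> Fs \<and> (\<forall>s\<in>S. {s} \<in> Fs)"

definition cconnected :: "'a set \<Rightarrow> 'a set set \<Rightarrow> 'a set \<Rightarrow> bool" where
  "cconnected S Fs C \<longleftrightarrow> C \<subseteq> S \<and>
     (\<forall>x\<in>C. \<forall>y\<in>C. \<exists>F\<in>Fs. F \<subseteq> C \<and> x \<in> F \<and> y \<in> F)"

definition ccomponents :: "'a set \<Rightarrow> 'a set set \<Rightarrow> 'a set \<Rightarrow> 'a set set" where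
  "ccomponents S Fs S' = {K. K \<subseteq> S' \<and> cconnected S Fs K \<and>
     (\<forall>K'. K \<subseteq> K' \<and> K' \<subseteq> S' \<and> cconnected S Fs K' \<longrightarrow> K' = K)}"

definition necklace :: "'a set \<Rightarrow> 'a set set \<Rightarrow> 'a set \<Rightarrow> bool" where
  "necklace S Fs N \<longleftrightarrow> cconnected S Fs N \<and>
     (\<exists>H :: nat \<Rightarrow> 'a set. (\<forall>n. finite (H n) \<and> cconnected S Fs (H n)) \<and>
        N = (\<Union>n. H n) \<and>
        (\<forall>i j. H i \<inter> H j \<noteq> {} \<longleftrightarrow> (i \<le> j + 1 \<and> j \<le> i + 1)))"

definition ctail :: "'a set \<Rightarrow> 'a set set \<Rightarrow> 'a set \<Rightarrow> 'a set \<Rightarrow> 'a set" where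
  "ctail S Fs N X = (THE K. K \<in> ccomponents S Fs (N - X) \<and> finite (N - K))"

definition neck_equiv :: "'a set \<Rightarrow> 'a set set \<Rightarrow> 'a set \<Rightarrow> 'a set \<Rightarrow> bool" where
  "neck_equiv S Fs N N' \<longleftrightarrow> (\<forall>X. finite X \<and> X \<subseteq> S \<longrightarrow>
     (\<exists>K\<in>ccomponents S Fs (S - X). ctail S Fs N X \<subseteq> K \<and> ctail S Fs N' X \<subseteq> K))"

definition cends :: "'a set \<Rightarrow> 'a set set \<Rightarrow> 'a set set set" where
  "cends S Fs = {{N'. necklace S Fs N' \<and> neck_equiv S Fs N N'} | N. necklace S Fs N}"

definition endK :: "'a set \<Rightarrow> 'a set set \<Rightarrow> 'a set \<Rightarrow> 'a set set \<Rightarrow> 'a set" where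
  "endK S Fs X \<omega> = (THE K. K \<in> ccomponents S Fs (S - X) \<and> (\<forall>N\<in>\<omega>. ctail S Fs N X \<subseteq> K))"

definition converges :: "'a set \<Rightarrow> 'a set set \<Rightarrow> 'a set \<Rightarrow> 'a set set \<Rightarrow> bool" where
  "converges S Fs Y \<nu> \<longleftrightarrow> infinite Y \<and>
     (\<forall>X. finite X \<and> X \<subseteq> S \<longrightarrow> finite (Y - endK S Fs X \<nu>))"

definition in_closure :: "'a set \<Rightarrow> 'a set set \<Rightarrow> 'a set \<Rightarrow> 'a set set \<Rightarrow> bool" where
  "in_closure S Fs U \<nu> \<longleftrightarrow> (\<forall>X. finite X \<and> X \<subseteq> S \<longrightarrow> endK S Fs X \<nu> \<inter> U \<noteq> {})"

definition gpath :: "('a \<times> 'a) set \<Rightarrow> 'a list \<Rightarrow> bool" where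
  "gpath E xs \<longleftrightarrow> xs \<noteq> [] \<and> distinct xs \<and>
     (\<forall>i. Suc i < length xs \<longrightarrow> (xs ! i, xs ! Suc i) \<in> E)"

definition rooted_tree :: "'a set \<Rightarrow> ('a \<times> 'a) set \<Rightarrow> 'a \<Rightarrow> bool" where
  "rooted_tree V E r \<longleftrightarrow> r \<in> V \<and> E \<subseteq> V \<times> V \<and> sym E \<and> (\<forall>x. (x, x) \<notin> E) \<and>
     (\<forall>x\<in>V. \<forall>y\<in>V. \<exists>xs. gpath E xs \<and> hd xs = x \<and> last xs = y) \<and>
     \<not> (\<exists>xs. gpath E xs \<and> 3 \<le> length xs \<and> (last xs, hd xs) \<in> E)"

definition tree_le :: "('a \<times> 'a) set \<Rightarrow> 'a \<Rightarrow> 'a \<Rightarrow> 'a \<Rightarrow> bool" where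
  "tree_le E r x y \<longleftrightarrow> (\<exists>xs. gpath E xs \<and> hd xs = r \<and> last xs = y \<and> x \<in> set xs)"

definition tree_down :: "('a \<times> 'a) set \<Rightarrow> 'a \<Rightarrow> 'a \<Rightarrow> 'a set" where
  "tree_down E r t = {x. tree_le E r x t \<and> x \<noteq> t}"

definition gray :: "'a set \<Rightarrow> ('a \<times> 'a) set \<Rightarrow> (nat \<Rightarrow> 'a) \<Rightarrow> bool" where
  "gray V E f \<longleftrightarrow> inj f \<and> (\<forall>n. f n \<in> V \<and> (f n, f (Suc n)) \<in> E)"

definition weak_normal_tree :: "'a set \<Rightarrow> 'a set set \<Rightarrow> 'a set \<Rightarrow> ('a \<times> 'a) set \<Rightarrow> 'a \<Rightarrow> bool" where
  "weak_normal_tree S Fs V E r \<longleftrightarrow> rooted_tree V E r \<and> V \<subseteq> S \<and>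
     (\<forall>C. cconnected S Fs C \<longrightarrow> (\<forall>u\<in>C \<inter> V. \<forall>v\<in>C \<inter> V.
         \<not> tree_le E r u v \<and> \<not> tree_le E r v u \<longrightarrow>
         (\<exists>w\<in>C. tree_le E r w u \<and> tree_le E r w v))) \<and>
     (\<forall>u\<in>V. \<forall>v\<in>V. tree_le E r u v \<longrightarrow>
         (\<exists>C. cconnected S Fs C \<and> u \<in> C \<and> v \<in> C \<and> C \<inter> tree_down E r u = {}))"

definition normal_tree :: "'a set \<Rightarrow> 'a set set \<Rightarrow> 'a set \<Rightarrow> ('a \<times> 'a) set \<Rightarrow> 'a \<Rightarrow> bool" where
  "normal_tree S Fs V E r \<longleftrightarrow> weak_normal_tree S Fs V E r \<and>
     (\<forall>f. gray V E f \<and> f 0 = r \<longrightarrow> (\<exists>N. necklace S Fs N \<and> finite (range f - N)))"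

definition greach :: "('a \<times> 'a) set \<Rightarrow> 'a set \<Rightarrow> 'a \<Rightarrow> 'a \<Rightarrow> bool" where
  "greach E X x y \<longleftrightarrow> (\<exists>xs. gpath E xs \<and> hd xs = x \<and> last xs = y \<and> set xs \<inter> X = {})"

definition ray_equiv :: "'a set \<Rightarrow> ('a \<times> 'a) set \<Rightarrow> (nat \<Rightarrow> 'a) \<Rightarrow> (nat \<Rightarrow> 'a) \<Rightarrow> bool" where
  "ray_equiv V E f g \<longleftrightarrow> (\<forall>X. finite X \<and> X \<subseteq> V \<longrightarrow>
     (\<exists>n m. (\<forall>k\<ge>n. f k \<notin> X) \<and> (\<forall>k\<ge>m. g k \<notin> X) \<and> greach E X (f n) (g m)))"

definition gends :: "'a set \<Rightarrow> ('a \<times> 'a) set \<Rightarrow> (nat \<Rightarrow> 'a) set set" where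
  "gends V E = {{g. gray V E g \<and> ray_equiv V E f g} | f. gray V E f}"

definition root_ray :: "'a \<Rightarrow> (nat \<Rightarrow> 'a) set \<Rightarrow> nat \<Rightarrow> 'a" where
  "root_ray r \<omega> = (THE f. f \<in> \<omega> \<and> f 0 = r)"

end

theory Submission
  imports Defs
begin

text \<open>
  By normality the root ray of an end of \<open>T\<close> is almost contained in a necklace, so it
  converges to the end of that necklace; it converges to no other end, because distinct ends are
  separated by a finite set.

  Two distinct root rays branch at some vertex.  After deleting the finite set \<open>X\<close> of vertices
  below the branch point, late vertices of both rays lie in the component of their common end;
  condition (1) of weak normal trees gives them a common lower bound in that component, but every
  common lower bound lies in \<open>X\<close>.  Hence the map is injective.

  For an end \<open>\<nu>\<close> in the closure of \<open>V(T)\<close>, say that a vertex \<open>t\<close> points to \<open>\<nu>\<close> if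
  \<open>t \<in> K(X, \<nu>)\<close> for the set \<open>X\<close> of vertices strictly below \<open>t\<close>.  The root points to \<open>\<nu>\<close>,
  and by condition (2) every vertex pointing to \<open>\<nu>\<close> has a child pointing to \<open>\<nu>\<close>.  The root ray
  built from such children meets every \<open>K(X, \<nu>)\<close> arbitrarily late (condition (1) again), so the
  end it converges to is \<open>\<nu>\<close>.
\<close>

lemma cconnected_subset: "cconnected S Fs C \<Longrightarrow> C \<subseteq> S"
  unfolding cconnected_def by blast

lemma cconnectedD:
  "cconnected S Fs C \<Longrightarrow> x \<in> C \<Longrightarrow> y \<in> C \<Longrightarrow> \<exists>F\<in>Fs. F \<subseteq> C \<and> x \<in> F \<and> y \<in> F"
  unfolding cconnected_def by blast

lemma ccomponentsD: "K \<in> ccomponents S Fs S' \<Longrightarrow> K \<subseteq> S' \<and> cconnected S Fs K"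
  unfolding ccomponents_def by blast

locale connectoid_space =
  fixes S :: "'a set" and Fs :: "'a set set"
  assumes connectoid: "connectoid S Fs"
begin

lemma cconnected_Union:
  assumes "\<And>C. C \<in> A \<Longrightarrow> cconnected S Fs C \<and> x \<in> C"
  shows "cconnected S Fs (\<Union>A)"
  unfolding cconnected_def
proof (intro conjI ballI)
  show "\<Union>A \<subseteq> S" using assms cconnected_subset[of S Fs] by (meson Sup_least)
next
  fix y z assume "y \<in> \<Union>A" "z \<in> \<Union>A"
  then obtain C1 C2 where C: "C1 \<in> A" "C2 \<in> A" "y \<in> C1" "z \<in> C2" by blast
  obtain F1 where F1: "F1 \<in> Fs" "F1 \<subseteq> C1" "y \<in> F1" "x \<in> F1"
    using cconnectedD[of S Fs C1 y x] assms C by blast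
  obtain F2 where F2: "F2 \<in> Fs" "F2 \<subseteq> C2" "x \<in> F2" "z \<in> F2"
    using cconnectedD[of S Fs C2 x z] assms C by blast
  have "F1 \<union> F2 \<in> Fs"
    using connectoid F1(1,4) F2(1,3) unfolding connectoid_def by blast
  moreover have "F1 \<union> F2 \<subseteq> \<Union>A" using F1(2) F2(2) C(1,2) by blast
  ultimately show "\<exists>F\<in>Fs. F \<subseteq> \<Union>A \<and> y \<in> F \<and> z \<in> F"
    using F1(3) F2(4) by blast
qed

lemma cconnected_Un:
  assumes "cconnected S Fs A" "cconnected S Fs B" "A \<inter> B \<noteq> {}"
  shows "cconnected S Fs (A \<union> B)"
proof -
  obtain x where "x \<in> A" "x \<in> B" using assms(3) by blast
  then have "cconnected S Fs (\<Union>{A, B})"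
    using assms by (intro cconnected_Union) auto
  then show ?thesis by simp
qed

lemma ccomponent_absorb:
  assumes K: "K \<in> ccomponents S Fs S'" and "C \<subseteq> S'" "cconnected S Fs C" "C \<inter> K \<noteq> {}"
  shows "C \<subseteq> K"
proof -
  have "cconnected S Fs (K \<union> C)"
    using cconnected_Un ccomponentsD[OF K] assms(3,4) by blast
  moreover have "K \<union> C \<subseteq> S'" using ccomponentsD[OF K] assms(2) by blast
  ultimately have "K \<union> C = K" using K unfolding ccomponents_def by blast
  then show ?thesis by blast
qed

lemma ccomponents_eq:
  assumes "K1 \<in> ccomponents S Fs S'" "K2 \<in> ccomponents S Fs S'" "K1 \<inter> K2 \<noteq> {}"
  shows "K1 = K2"
proof
  show "K1 \<subseteq> K2" using ccomponent_absorb[OF assms(2)] ccomponentsD[OF assms(1)] assms(3) by blast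
  show "K2 \<subseteq> K1" using ccomponent_absorb[OF assms(1)] ccomponentsD[OF assms(2)] assms(3) by blast
qed

lemma ccomponent_exists:
  assumes C: "C \<subseteq> S'" "cconnected S Fs C" "x \<in> C"
  shows "\<exists>K\<in>ccomponents S Fs S'. C \<subseteq> K"
proof -
  define K where "K = \<Union>{D. D \<subseteq> S' \<and> cconnected S Fs D \<and> x \<in> D}"
  have "K \<in> ccomponents S Fs S'"
    unfolding ccomponents_def
  proof (intro CollectI conjI allI impI)
    show "K \<subseteq> S'" unfolding K_def by blast
    show "cconnected S Fs K" unfolding K_def by (rule cconnected_Union) blast
    fix K' assume K': "K \<subseteq> K' \<and> K' \<subseteq> S' \<and> cconnected S Fs K'"
    have "x \<in> K" unfolding K_def using C by blast
    then have "K' \<subseteq> K" using K' unfolding K_def by (intro Union_upper) blast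
    then show "K' = K" using K' by blast
  qed
  moreover have "C \<subseteq> K" unfolding K_def using C by blast
  ultimately show ?thesis by blast
qed

lemma cconnected_UN_chain_segment:
  assumes "\<And>n. cconnected S Fs (H n)" "\<And>n. H n \<inter> H (Suc n) \<noteq> {}"
  shows "cconnected S Fs (\<Union>n\<in>{n0..n0+m}. H n)"
proof (induction m)
  case 0 then show ?case using assms by simp
next
  case (Suc m)
  have "(\<Union>n\<in>{n0..n0+Suc m}. H n) = (\<Union>n\<in>{n0..n0+m}. H n) \<union> H (Suc (n0 + m))"
    by (simp add: atLeastAtMostSuc_conv Un_commute)
  moreover have "H (n0 + m) \<subseteq> (\<Union>n\<in>{n0..n0+m}. H n)" by (intro UN_upper) simp
  then have "(\<Union>n\<in>{n0..n0+m}. H n) \<inter> H (Suc (n0 + m)) \<noteq> {}"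
    using assms(2)[of "n0 + m"] by blast
  ultimately show ?case using cconnected_Un Suc assms(1) by simp
qed

lemma cconnected_UN_chain:
  assumes "\<And>n. cconnected S Fs (H n)" "\<And>n. H n \<inter> H (Suc n) \<noteq> {}"
  shows "cconnected S Fs (\<Union>n\<in>{n0..}. H n)"
  unfolding cconnected_def
proof (intro conjI ballI)
  show "(\<Union>n\<in>{n0..}. H n) \<subseteq> S" using assms(1) cconnected_subset[of S Fs] by (simp add: UN_least)
next
  fix y z assume "y \<in> (\<Union>n\<in>{n0..}. H n)" "z \<in> (\<Union>n\<in>{n0..}. H n)"
  then obtain a b where ab: "n0 \<le> a" "n0 \<le> b" "y \<in> H a" "z \<in> H b" by blast
  let ?P = "\<Union>n\<in>{n0..n0+(a+b)}. H n"
  have P: "cconnected S Fs ?P" by (rule cconnected_UN_chain_segment[of H, OF assms])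
  have yP: "y \<in> ?P" using ab by (intro UN_I[where a=a]) auto
  have zP: "z \<in> ?P" using ab by (intro UN_I[where a=b]) auto
  obtain F where F: "F \<in> Fs" "F \<subseteq> ?P" "y \<in> F" "z \<in> F"
    using cconnectedD[OF P yP zP] by blast
  have "?P \<subseteq> (\<Union>n\<in>{n0..}. H n)" by (intro UN_mono) auto
  then have "F \<subseteq> (\<Union>n\<in>{n0..}. H n)" using F(2) by (rule order_trans[rotated])
  then show "\<exists>F\<in>Fs. F \<subseteq> (\<Union>n\<in>{n0..}. H n) \<and> y \<in> F \<and> z \<in> F"
    using F(1,3,4) by blast
qed

end

section \<open>Necklaces and their ends\<close>

lemma necklaceE:
  assumes "necklace S Fs N"
  obtains H :: "nat \<Rightarrow> 'a set"
  where "\<And>n. finite (H n)" "\<And>n. cconnected S Fs (H n)" "N = (\<Union>n. H n)"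
    "\<And>i j. H i \<inter> H j \<noteq> {} \<longleftrightarrow> i \<le> j + 1 \<and> j \<le> i + 1"
proof -
  from assms obtain H :: "nat \<Rightarrow> 'a set" where H: "\<forall>n. finite (H n) \<and> cconnected S Fs (H n)"
    "N = (\<Union>n. H n)" "\<forall>i j. H i \<inter> H j \<noteq> {} \<longleftrightarrow> i \<le> j + 1 \<and> j \<le> i + 1"
    unfolding necklace_def by (elim conjE exE) (rule that, assumption+)
  show ?thesis by (rule that[of H]) (use H in simp_all)
qed

lemma necklace_subset: "necklace S Fs N \<Longrightarrow> N \<subseteq> S"
  unfolding necklace_def cconnected_def by blast

lemma necklace_infinite:
  assumes "necklace S Fs N"
  shows "infinite N"
proof -
  obtain H :: "nat \<Rightarrow> 'a set" where H: "N = (\<Union>n. H n)"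
    "\<And>i j. H i \<inter> H j \<noteq> {} \<longleftrightarrow> i \<le> j + 1 \<and> j \<le> i + 1"
    using necklaceE[OF assms] by metis
  have "H n \<noteq> {}" for n using H(2)[of n n] by auto
  define g where "g i = (SOME x. x \<in> H (2 * i))" for i
  have g: "g i \<in> H (2 * i)" for i unfolding g_def using \<open>H (2 * i) \<noteq> {}\<close> by (simp add: some_in_eq)
  have "inj g"
  proof (rule injI)
    fix i j assume "g i = g j"
    then have "H (2 * i) \<inter> H (2 * j) \<noteq> {}" using g[of i] g[of j] by auto
    then show "i = j" using H(2) by auto
  qed
  moreover have "range g \<subseteq> N" using g H(1) by blast
  ultimately show ?thesis using infinite_iff_countable_subset by blast
qed

text \<open>Each point lies in at most three beads.\<close>

lemma finite_beads_meeting: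
  fixes H :: "nat \<Rightarrow> 'a set"
  assumes "\<And>i j. H i \<inter> H j \<noteq> {} \<longleftrightarrow> i \<le> j + 1 \<and> j \<le> i + 1" "finite X"
  shows "finite {n. H n \<inter> X \<noteq> {}}"
proof -
  have "finite {n. x \<in> H n}" for x
  proof (cases "\<exists>i. x \<in> H i")
    case True
    then obtain i where "x \<in> H i" by blast
    then have "{n. x \<in> H n} \<subseteq> {..i + 1}" using assms(1)[of _ i] by blast
    then show ?thesis by (rule finite_subset) simp
  qed simp
  moreover have "{n. H n \<inter> X \<noteq> {}} = (\<Union>x\<in>X. {n. x \<in> H n})" by blast
  ultimately show ?thesis using assms(2) by simp
qed

lemma cofinite_subsets_meet:
  assumes "infinite N" "finite (N - A)" "finite (N - B)"
  shows "A \<inter> B \<noteq> {}"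
proof
  assume "A \<inter> B = {}"
  then have "N \<subseteq> (N - A) \<union> (N - B)" by blast
  moreover have "finite ((N - A) \<union> (N - B))" using assms(2,3) by simp
  ultimately show False using assms(1) finite_subset by auto
qed

lemma infinite_image_atLeast:
  fixes f :: "nat \<Rightarrow> 'a"
  assumes "inj f"
  shows "infinite (f ` {n..})"
proof
  assume "finite (f ` {n..})"
  moreover have "inj_on f {n..}" using assms by (simp add: inj_on_subset[of f UNIV])
  ultimately show False using finite_imageD infinite_Ici by blast
qed

lemma neck_equiv_sym: "neck_equiv S Fs N N' \<Longrightarrow> neck_equiv S Fs N' N"
  unfolding neck_equiv_def by (simp add: conj_commute)

definition neck_class :: "'a set \<Rightarrow> 'a set set \<Rightarrow> 'a set \<Rightarrow> 'a set set" where
  "neck_class S Fs N = {N'. necklace S Fs N' \<and> neck_equiv S Fs N N'}"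

lemma cends_iff: "\<nu> \<in> cends S Fs \<longleftrightarrow> (\<exists>N. necklace S Fs N \<and> \<nu> = neck_class S Fs N)"
  unfolding cends_def neck_class_def by blast

lemma converges_in_closure:
  assumes "converges S Fs Y \<nu>" "Y \<subseteq> U"
  shows "in_closure S Fs U \<nu>"
  unfolding in_closure_def
proof (intro allI impI)
  fix X assume X: "finite X \<and> X \<subseteq> S"
  have "infinite Y" "finite (Y - endK S Fs X \<nu>)" using assms(1) X unfolding converges_def by blast+
  then have "endK S Fs X \<nu> \<inter> Y \<noteq> {}" using cofinite_subsets_meet[of Y "endK S Fs X \<nu>" Y] by simp
  then show "endK S Fs X \<nu> \<inter> U \<noteq> {}" using assms(2) by blast
qed

lemma in_closureE:
  assumes "in_closure S Fs U \<nu>" "finite X" "X \<subseteq> S"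
  obtains u where "u \<in> endK S Fs X \<nu>" "u \<in> U"
  using assms unfolding in_closure_def by blast

lemma converges_frequently:
  fixes f :: "nat \<Rightarrow> 'a"
  assumes "converges S Fs (range f) \<nu>" "inj f" "finite X" "X \<subseteq> S"
  obtains k where "n \<le> k" "f k \<in> endK S Fs X \<nu>"
proof -
  have "finite (range f - endK S Fs X \<nu>)" using assms(1,3,4) unfolding converges_def by blast
  moreover have "f ` {n..} - endK S Fs X \<nu> \<subseteq> range f - endK S Fs X \<nu>" by blast
  ultimately have fin: "finite (f ` {n..} - endK S Fs X \<nu>)" using finite_subset by blast
  have inf: "infinite (f ` {n..})" using infinite_image_atLeast[OF assms(2)] .
  have "endK S Fs X \<nu> \<inter> f ` {n..} \<noteq> {}"
    using cofinite_subsets_meet[OF inf fin, of "f ` {n..}"] by simp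
  then obtain k where "k \<in> {n..}" "f k \<in> endK S Fs X \<nu>" by blast
  then show ?thesis using that by simp
qed

context connectoid_space
begin

lemma necklace_tail_exists:
  assumes N: "necklace S Fs N" and X: "finite X"
  shows "\<exists>K\<in>ccomponents S Fs (N - X). finite (N - K)"
proof -
  obtain H :: "nat \<Rightarrow> 'a set" where H: "\<And>n. finite (H n)" "\<And>n. cconnected S Fs (H n)"
    "N = (\<Union>n. H n)" "\<And>i j. H i \<inter> H j \<noteq> {} \<longleftrightarrow> i \<le> j + 1 \<and> j \<le> i + 1"
    using necklaceE[OF N] by blast
  obtain n0 where n0: "\<forall>n\<in>{n. H n \<inter> X \<noteq> {}}. n < n0"
    using finite_beads_meeting[OF H(4) X] finite_nat_set_iff_bounded by blast
  define U where "U = (\<Union>n\<in>{n0..}. H n)"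
  have "cconnected S Fs U"
    unfolding U_def using H(2,4) by (intro cconnected_UN_chain) auto
  moreover have "U \<subseteq> N - X"
  proof
    fix x assume "x \<in> U"
    then obtain n where n: "n0 \<le> n" "x \<in> H n" unfolding U_def by blast
    then have "x \<notin> X" using n0 by force
    then show "x \<in> N - X" using n H(3) by blast
  qed
  moreover have "H n0 \<noteq> {}" using H(4)[of n0 n0] by auto
  then obtain x where "x \<in> H n0" by blast
  then have "x \<in> U" unfolding U_def by blast
  ultimately obtain K where K: "K \<in> ccomponents S Fs (N - X)" "U \<subseteq> K"
    using ccomponent_exists by blast
  have "N - K \<subseteq> (\<Union>n\<in>{..<n0}. H n)"
  proof
    fix x assume x: "x \<in> N - K"
    then obtain n where n: "x \<in> H n" using H(3) by blast
    then have "\<not> n0 \<le> n" using x K(2) unfolding U_def by blast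
    then show "x \<in> (\<Union>n\<in>{..<n0}. H n)" using n by auto
  qed
  then have "finite (N - K)" by (rule finite_subset) (simp add: H(1))
  then show ?thesis using K(1) by blast
qed

lemma ctail:
  assumes N: "necklace S Fs N" and X: "finite X"
  shows "ctail S Fs N X \<in> ccomponents S Fs (N - X)" "finite (N - ctail S Fs N X)"
proof -
  obtain K where K: "K \<in> ccomponents S Fs (N - X)" "finite (N - K)"
    using necklace_tail_exists[OF N X] by blast
  have "K' = K" if "K' \<in> ccomponents S Fs (N - X)" "finite (N - K')" for K'
    using ccomponents_eq[OF that(1) K(1)] cofinite_subsets_meet necklace_infinite[OF N] that(2) K(2)
    by blast
  then have "\<exists>!K. K \<in> ccomponents S Fs (N - X) \<and> finite (N - K)" using K by blast
  from theI'[OF this] show "ctail S Fs N X \<in> ccomponents S Fs (N - X)" "finite (N - ctail S Fs N X)"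
    unfolding ctail_def by auto
qed

lemma ctail_subset: "necklace S Fs N \<Longrightarrow> finite X \<Longrightarrow> ctail S Fs N X \<subseteq> N - X"
  using ctail(1) ccomponentsD by blast

lemma ctail_cconnected: "necklace S Fs N \<Longrightarrow> finite X \<Longrightarrow> cconnected S Fs (ctail S Fs N X)"
  using ctail(1) ccomponentsD by blast

lemma ctail_nonempty: "necklace S Fs N \<Longrightarrow> finite X \<Longrightarrow> ctail S Fs N X \<noteq> {}"
  using ctail(2) necklace_infinite by fastforce

lemma ctail_subset_ccomponent:
  assumes "necklace S Fs N" "finite X"
  shows "\<exists>K\<in>ccomponents S Fs (S - X). ctail S Fs N X \<subseteq> K"
proof -
  have "ctail S Fs N X \<subseteq> S - X" using ctail_subset[OF assms] necklace_subset[OF assms(1)] by blast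
  then show ?thesis
    using ccomponent_exists ctail_cconnected[OF assms] ctail_nonempty[OF assms] by blast
qed

lemma ctail_antimono:
  assumes N: "necklace S Fs N" and "finite X'" "X \<subseteq> X'"
  shows "ctail S Fs N X' \<subseteq> ctail S Fs N X"
proof -
  have X: "finite X" using assms(2,3) finite_subset by blast
  have "ctail S Fs N X' \<inter> ctail S Fs N X \<noteq> {}"
    using cofinite_subsets_meet necklace_infinite[OF N] ctail(2)[OF N] X assms(2) by blast
  moreover have "ctail S Fs N X' \<subseteq> N - X"
    using ctail_subset[OF N assms(2)] assms(3) by blast
  ultimately show ?thesis
    using ccomponent_absorb[OF ctail(1)[OF N X]] ctail_cconnected[OF N assms(2)] by blast
qed

lemma neck_equiv_refl:
  assumes "necklace S Fs N"
  shows "neck_equiv S Fs N N"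
  unfolding neck_equiv_def
proof (intro allI impI)
  fix X assume "finite X \<and> X \<subseteq> S"
  then obtain K where "K \<in> ccomponents S Fs (S - X)" "ctail S Fs N X \<subseteq> K"
    using ctail_subset_ccomponent[OF assms] by blast
  then show "\<exists>K\<in>ccomponents S Fs (S - X). ctail S Fs N X \<subseteq> K \<and> ctail S Fs N X \<subseteq> K"
    by blast
qed

lemma neck_equiv_trans:
  assumes N': "necklace S Fs N'" and "neck_equiv S Fs N N'" "neck_equiv S Fs N' N''"
  shows "neck_equiv S Fs N N''"
  unfolding neck_equiv_def
proof (intro allI impI)
  fix X assume X: "finite X \<and> X \<subseteq> S"
  obtain K1 where K1: "K1 \<in> ccomponents S Fs (S - X)" "ctail S Fs N X \<subseteq> K1" "ctail S Fs N' X \<subseteq> K1"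
    using assms(2) X unfolding neck_equiv_def by blast
  obtain K2 where K2: "K2 \<in> ccomponents S Fs (S - X)" "ctail S Fs N' X \<subseteq> K2" "ctail S Fs N'' X \<subseteq> K2"
    using assms(3) X unfolding neck_equiv_def by blast
  have "K1 \<inter> K2 \<noteq> {}" using ctail_nonempty[OF N'] X K1(3) K2(2) by blast
  then have "K1 = K2" using ccomponents_eq[OF K1(1) K2(1)] by blast
  then show "\<exists>K\<in>ccomponents S Fs (S - X). ctail S Fs N X \<subseteq> K \<and> ctail S Fs N'' X \<subseteq> K"
    using K1 K2 by blast
qed

lemma neck_class_self: "necklace S Fs N \<Longrightarrow> N \<in> neck_class S Fs N"
  unfolding neck_class_def using neck_equiv_refl by blast

lemma neck_class_eq:
  assumes N: "necklace S Fs N" and "N' \<in> neck_class S Fs N"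
  shows "neck_class S Fs N' = neck_class S Fs N"
proof -
  have N': "necklace S Fs N'" and e: "neck_equiv S Fs N N'"
    using assms(2) unfolding neck_class_def by auto
  show ?thesis
    unfolding neck_class_def
    using neck_equiv_trans[OF N' e] neck_equiv_trans[OF N neck_equiv_sym[OF e]] N N' by blast
qed

lemma endK_neck_class:
  assumes N: "necklace S Fs N" and X: "finite X" "X \<subseteq> S"
  shows "endK S Fs X (neck_class S Fs N) \<in> ccomponents S Fs (S - X)"
    "\<And>N'. N' \<in> neck_class S Fs N \<Longrightarrow> ctail S Fs N' X \<subseteq> endK S Fs X (neck_class S Fs N)"
proof -
  obtain K where K: "K \<in> ccomponents S Fs (S - X)" "ctail S Fs N X \<subseteq> K"
    using ctail_subset_ccomponent[OF N X(1)] by blast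
  have meets_K: "K' = K" if "K' \<in> ccomponents S Fs (S - X)" "ctail S Fs N X \<subseteq> K'" for K'
  proof -
    have "K' \<inter> K \<noteq> {}" using ctail_nonempty[OF N X(1)] K(2) that(2) by blast
    then show ?thesis using ccomponents_eq[OF that(1) K(1)] by blast
  qed
  have tails: "ctail S Fs N' X \<subseteq> K" if N': "N' \<in> neck_class S Fs N" for N'
  proof -
    obtain K' where K': "K' \<in> ccomponents S Fs (S - X)" "ctail S Fs N X \<subseteq> K'" "ctail S Fs N' X \<subseteq> K'"
      using N' X unfolding neck_class_def neck_equiv_def by blast
    then show ?thesis using meets_K by blast
  qed
  have "\<exists>!K. K \<in> ccomponents S Fs (S - X) \<and> (\<forall>N'\<in>neck_class S Fs N. ctail S Fs N' X \<subseteq> K)"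
    using K(1) tails meets_K neck_class_self[OF N] by blast
  from theI'[OF this]
  show "endK S Fs X (neck_class S Fs N) \<in> ccomponents S Fs (S - X)"
    "\<And>N'. N' \<in> neck_class S Fs N \<Longrightarrow> ctail S Fs N' X \<subseteq> endK S Fs X (neck_class S Fs N)"
    unfolding endK_def by auto
qed

lemma endK_in_ccomponents:
  assumes "\<nu> \<in> cends S Fs" "finite X" "X \<subseteq> S"
  shows "endK S Fs X \<nu> \<in> ccomponents S Fs (S - X)"
proof -
  obtain N where "necklace S Fs N" "\<nu> = neck_class S Fs N" using assms(1) cends_iff by blast
  then show ?thesis using endK_neck_class(1) assms(2,3) by simp
qed

lemma endK_subset:
  assumes "\<nu> \<in> cends S Fs" "finite X" "X \<subseteq> S"
  shows "endK S Fs X \<nu> \<subseteq> S - X"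
  using ccomponentsD[OF endK_in_ccomponents[OF assms]] by blast

lemma ctail_subset_endK:
  assumes "necklace S Fs N" "finite X" "X \<subseteq> S"
  shows "ctail S Fs N X \<subseteq> endK S Fs X (neck_class S Fs N)"
  using endK_neck_class(2)[OF assms] neck_class_self[OF assms(1)] by blast

lemma endK_antimono:
  assumes \<nu>: "\<nu> \<in> cends S Fs" and X': "finite X'" "X' \<subseteq> S" and "X \<subseteq> X'"
  shows "endK S Fs X' \<nu> \<subseteq> endK S Fs X \<nu>"
proof -
  obtain N where N: "necklace S Fs N" "\<nu> = neck_class S Fs N" using \<nu> cends_iff by blast
  have X: "finite X" "X \<subseteq> S" using X' assms(4) finite_subset by auto
  have "ctail S Fs N X' \<subseteq> endK S Fs X' \<nu>" using ctail_subset_endK[OF N(1) X'] N(2) by simp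
  moreover have "ctail S Fs N X' \<subseteq> endK S Fs X \<nu>"
    using ctail_antimono[OF N(1) X'(1) assms(4)] ctail_subset_endK[OF N(1) X] N(2) by simp
  ultimately have "endK S Fs X' \<nu> \<inter> endK S Fs X \<nu> \<noteq> {}"
    using ctail_nonempty[OF N(1) X'(1)] by blast
  moreover have "endK S Fs X' \<nu> \<subseteq> S - X" using endK_subset[OF \<nu> X'] assms(4) by blast
  moreover have "cconnected S Fs (endK S Fs X' \<nu>)"
    using ccomponentsD[OF endK_in_ccomponents[OF \<nu> X']] by blast
  ultimately show ?thesis
    using ccomponent_absorb[OF endK_in_ccomponents[OF \<nu> X]] by blast
qed

lemma ends_separated:
  assumes \<nu>: "\<nu> \<in> cends S Fs" and \<nu>': "\<nu>' \<in> cends S Fs" and "\<nu> \<noteq> \<nu>'"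
  obtains X where "finite X" "X \<subseteq> S" "endK S Fs X \<nu> \<inter> endK S Fs X \<nu>' = {}"
proof -
  obtain N where N: "necklace S Fs N" "\<nu> = neck_class S Fs N" using \<nu> cends_iff by blast
  obtain N' where N': "necklace S Fs N'" "\<nu>' = neck_class S Fs N'" using \<nu>' cends_iff by blast
  have "\<not> neck_equiv S Fs N N'"
  proof
    assume "neck_equiv S Fs N N'"
    then have "N' \<in> neck_class S Fs N" using N'(1) unfolding neck_class_def by blast
    then show False using neck_class_eq[OF N(1)] N N' assms(3) by simp
  qed
  then obtain X where X: "finite X" "X \<subseteq> S"
    and apart: "\<not> (\<exists>K\<in>ccomponents S Fs (S - X). ctail S Fs N X \<subseteq> K \<and> ctail S Fs N' X \<subseteq> K)"
    unfolding neck_equiv_def by blast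
  have "endK S Fs X \<nu> \<inter> endK S Fs X \<nu>' = {}"
  proof (rule ccontr)
    assume "endK S Fs X \<nu> \<inter> endK S Fs X \<nu>' \<noteq> {}"
    then have "endK S Fs X \<nu> = endK S Fs X \<nu>'"
      using ccomponents_eq endK_in_ccomponents[OF \<nu> X] endK_in_ccomponents[OF \<nu>' X] by blast
    then show False
      using apart endK_in_ccomponents[OF \<nu> X] ctail_subset_endK[OF N(1) X] ctail_subset_endK[OF N'(1) X]
        N(2) N'(2) by auto
  qed
  then show ?thesis using that X by blast
qed

lemma converges_unique:
  assumes "\<nu> \<in> cends S Fs" "\<nu>' \<in> cends S Fs" "converges S Fs Y \<nu>" "converges S Fs Y \<nu>'"
  shows "\<nu> = \<nu>'"
proof (rule ccontr)
  assume "\<nu> \<noteq> \<nu>'"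
  then obtain X where X: "finite X" "X \<subseteq> S" "endK S Fs X \<nu> \<inter> endK S Fs X \<nu>' = {}"
    using ends_separated assms(1,2) by blast
  have "infinite Y" "finite (Y - endK S Fs X \<nu>)" "finite (Y - endK S Fs X \<nu>')"
    using assms(3,4) X(1,2) unfolding converges_def by auto
  then show False using cofinite_subsets_meet X(3) by blast
qed

lemma converges_neck_class:
  assumes N: "necklace S Fs N" and "infinite Y" "finite (Y - N)"
  shows "converges S Fs Y (neck_class S Fs N)"
  unfolding converges_def
proof (intro conjI allI impI)
  show "infinite Y" by fact
  fix X assume X: "finite X \<and> X \<subseteq> S"
  then have "Y - endK S Fs X (neck_class S Fs N) \<subseteq> (Y - N) \<union> (N - ctail S Fs N X)"
    using ctail_subset_endK[OF N] by blast
  moreover have "finite ((Y - N) \<union> (N - ctail S Fs N X))"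
    using assms(3) ctail(2)[OF N] X by simp
  ultimately show "finite (Y - endK S Fs X (neck_class S Fs N))" by (rule finite_subset)
qed

end

definition walk :: "('a \<times> 'a) set \<Rightarrow> 'a list \<Rightarrow> bool" where
  "walk E xs \<longleftrightarrow> xs \<noteq> [] \<and> successively (\<lambda>x y. (x, y) \<in> E) xs"

lemma gpath_iff_walk: "gpath E xs \<longleftrightarrow> walk E xs \<and> distinct xs"
  unfolding gpath_def walk_def successively_conv_nth by blast

lemma walk_Cons: "walk E (a # xs) \<longleftrightarrow> xs = [] \<or> (a, hd xs) \<in> E \<and> walk E xs"
  unfolding walk_def by (cases xs) auto

lemma walk_append:
  "xs \<noteq> [] \<Longrightarrow> ys \<noteq> [] \<Longrightarrow> walk E (xs @ ys) \<longleftrightarrow> walk E xs \<and> walk E ys \<and> (last xs, hd ys) \<in> E"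
  unfolding walk_def by (auto simp: successively_append_iff)

lemma walk_prefix: "walk E (xs @ ys) \<Longrightarrow> xs \<noteq> [] \<Longrightarrow> walk E xs"
  unfolding walk_def by (auto simp: successively_append_iff)

lemma walk_suffix: "walk E (xs @ ys) \<Longrightarrow> ys \<noteq> [] \<Longrightarrow> walk E ys"
  unfolding walk_def by (auto simp: successively_append_iff)

lemma walk_take: "walk E xs \<Longrightarrow> 0 < k \<Longrightarrow> walk E (take k xs)"
  using walk_prefix[of E "take k xs" "drop k xs"] by (simp add: walk_def)

lemma walk_glue: "walk E (xs @ [z]) \<Longrightarrow> walk E (z # ys) \<Longrightarrow> walk E (xs @ z # ys)"
  unfolding walk_def by (auto simp: successively_append_iff)

lemma walk_rev:
  assumes "sym E"
  shows "walk E (rev xs) \<longleftrightarrow> walk E xs"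
proof -
  have "(\<lambda>x y. (y, x) \<in> E) = (\<lambda>x y. (x, y) \<in> E)" using assms by (auto simp: sym_def)
  from arg_cong[OF this, of "\<lambda>P. successively P xs"] show ?thesis
    unfolding walk_def by (simp add: successively_rev)
qed

lemma walk_nth: "walk E xs \<Longrightarrow> Suc i < length xs \<Longrightarrow> (xs ! i, xs ! Suc i) \<in> E"
  unfolding walk_def using successively_nth by fast

lemma walk_set:
  assumes "walk E xs" "hd xs \<in> V" "E \<subseteq> V \<times> V"
  shows "set xs \<subseteq> V"
  using assms(1,2)
proof (induction xs)
  case (Cons a xs)
  show ?case
  proof (cases "xs = []")
    case False
    then have "(a, hd xs) \<in> E" "walk E xs" using Cons.prems(1) by (simp_all add: walk_Cons)
    then show ?thesis using Cons assms(3) by auto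
  qed (use Cons.prems in simp)
qed simp

lemma walk_map_upt:
  assumes "\<And>k. (f k, f (Suc k)) \<in> E" "i \<le> j"
  shows "walk E (map f [i..<Suc j])"
  unfolding walk_def successively_conv_nth
proof (intro conjI allI impI)
  show "map f [i..<Suc j] \<noteq> []" using assms(2) by (simp del: upt_Suc)
  fix l assume "Suc l < length (map f [i..<Suc j])"
  then have "Suc l < Suc j - i" by (simp del: upt_Suc)
  then show "(map f [i..<Suc j] ! l, map f [i..<Suc j] ! Suc l) \<in> E"
    using assms(1)[of "i + l"] by (simp del: upt_Suc add: nth_upt)
qed

lemma walk_to_gpath:
  "walk E xs \<Longrightarrow> \<exists>ys. gpath E ys \<and> hd ys = hd xs \<and> last ys = last xs \<and> set ys \<subseteq> set xs"
proof (induction "length xs" arbitrary: xs rule: less_induct)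
  case less
  show ?case
  proof (cases "distinct xs")
    case True then show ?thesis using less.prems by (auto simp: gpath_iff_walk)
  next
    case False
    then obtain a y b c where xs: "xs = a @ [y] @ b @ [y] @ c" using not_distinct_decomp by blast
    have "walk E ((a @ [y]) @ (b @ y # c))" "walk E ((a @ y # b) @ (y # c))"
      using less.prems unfolding xs by simp_all
    then have "walk E (a @ [y])" "walk E (y # c)" using walk_prefix walk_suffix by blast+
    then have "walk E (a @ y # c)" by (rule walk_glue)
    moreover have "length (a @ y # c) < length xs" unfolding xs by simp
    ultimately obtain ys where ys: "gpath E ys" "hd ys = hd (a @ y # c)"
      "last ys = last (a @ y # c)" "set ys \<subseteq> set (a @ y # c)"
      using less.hyps by blast
    have "hd (a @ y # c) = hd xs" unfolding xs by (cases a) auto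
    moreover have "last (a @ y # c) = last xs" unfolding xs by (cases c rule: rev_cases) auto
    moreover have "set (a @ y # c) \<subseteq> set xs" unfolding xs by auto
    ultimately show ?thesis using ys by (intro exI[where x=ys]) auto
  qed
qed

lemma walk_preserves:
  assumes "walk E xs" "set xs \<inter> X = {}" "P (hd xs)"
    "\<And>x y. P x \<Longrightarrow> (x, y) \<in> E \<Longrightarrow> y \<notin> X \<Longrightarrow> P y"
  shows "P (last xs)"
  using assms(1-3)
proof (induction xs)
  case (Cons a xs)
  show ?case
  proof (cases "xs = []")
    case False
    moreover have "hd xs \<in> set xs" using False by simp
    ultimately have "(a, hd xs) \<in> E" "walk E xs" "hd xs \<notin> X" "set xs \<inter> X = {}"
      using Cons.prems(1,2) by (auto simp: walk_Cons disjoint_iff)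
    then show ?thesis using Cons assms(4) False by simp
  qed (use Cons.prems in simp)
qed (simp add: walk_def)

section \<open>Rooted trees\<close>

locale rooted_tree_graph =
  fixes V :: "'a set" and E :: "('a \<times> 'a) set" and r :: 'a
  assumes rooted_tree: "rooted_tree V E r"
begin

abbreviation tree_below :: "'a \<Rightarrow> 'a \<Rightarrow> bool" (infix "\<preceq>" 50)
  where "x \<preceq> y \<equiv> tree_le E r x y"

lemma root_in_V: "r \<in> V"
  using rooted_tree unfolding rooted_tree_def by blast

lemma edges_in_V: "E \<subseteq> V \<times> V"
  using rooted_tree unfolding rooted_tree_def by blast

lemma sym_E: "sym E"
  using rooted_tree unfolding rooted_tree_def by blast

lemma gpath_exists: "x \<in> V \<Longrightarrow> y \<in> V \<Longrightarrow> \<exists>xs. gpath E xs \<and> hd xs = x \<and> last xs = y"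
  using rooted_tree unfolding rooted_tree_def by blast

lemma no_closing_edge: "gpath E xs \<Longrightarrow> 3 \<le> length xs \<Longrightarrow> (last xs, hd xs) \<notin> E"
  using rooted_tree unfolding rooted_tree_def by blast

text \<open>Otherwise the first path up to its first vertex \<open>z\<close> on the second, followed by the
  second path back from \<open>z\<close>, is a cycle through \<open>a\<close>.\<close>

lemma gpath_Cons_same_hd:
  assumes xs: "gpath E (a # xs)" and ys: "gpath E (a # ys)"
    and ne: "xs \<noteq> []" "ys \<noteq> []" and "last xs = last ys"
  shows "hd xs = hd ys"
proof (rule ccontr)
  assume hd_ne: "hd xs \<noteq> hd ys"
  have "\<exists>x\<in>set xs. x \<in> set ys" using ne assms(5) by (metis last_in_set)
  then obtain p z p' where xs_eq: "xs = p @ z # p'" "z \<in> set ys" "\<forall>y\<in>set p. y \<notin> set ys"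
    by (rule split_list_first_propE)
  obtain q q' where ys_eq: "ys = q @ z # q'" using xs_eq(2) by (meson split_list)
  have walk_xs: "walk E (a # xs)" and walk_ys: "walk E ys" and dist: "distinct (a # xs)" "distinct (a # ys)"
    using xs ys ne(2) by (auto simp: gpath_iff_walk walk_Cons)
  have "walk E ((a # p) @ [z])"
    using walk_prefix[of E "(a # p) @ [z]" p'] walk_xs xs_eq(1) by simp
  moreover have "walk E (q @ [z])"
    using walk_prefix[of E "q @ [z]" q'] walk_ys ys_eq by simp
  then have "walk E (z # rev q)" using walk_rev[OF sym_E, of "q @ [z]"] by simp
  ultimately have "walk E (a # p @ z # rev q)" using walk_glue by fastforce
  moreover have "distinct (a # p @ z # rev q)" using dist xs_eq ys_eq by auto
  ultimately have path: "gpath E (a # p @ z # rev q)" by (simp add: gpath_iff_walk)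
  have "p \<noteq> [] \<or> q \<noteq> []" using hd_ne xs_eq(1) ys_eq by auto
  then have "3 \<le> length (a # p @ z # rev q)" by (cases p; cases q) auto
  moreover have "last (a # p @ z # rev q) = hd ys" using ys_eq by (cases q) auto
  moreover have "(a, hd ys) \<in> E" using ys ne(2) by (cases ys) (auto simp: gpath_iff_walk walk_Cons)
  then have "(hd ys, a) \<in> E" using sym_E by (simp add: sym_def)
  ultimately show False using no_closing_edge[OF path] by simp
qed

lemma gpath_unique:
  "gpath E xs \<Longrightarrow> gpath E ys \<Longrightarrow> hd xs = hd ys \<Longrightarrow> last xs = last ys \<Longrightarrow> xs = ys"
proof (induction xs arbitrary: ys)
  case Nil then show ?case by (simp add: gpath_def)
next
  case (Cons a xs)
  obtain ys' where ys: "ys = a # ys'" using Cons.prems(2,3) by (cases ys) (auto simp: gpath_def)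
  have dist: "a \<notin> set xs" "a \<notin> set ys'" using Cons.prems(1,2) ys by (auto simp: gpath_def)
  have "xs = [] \<longleftrightarrow> ys' = []"
  proof
    assume "xs = []"
    then have "last (a # ys') = a" using Cons.prems(4) ys by simp
    then show "ys' = []" using dist(2) by (metis last_ConsR last_in_set)
  next
    assume "ys' = []"
    then have "last (a # xs) = a" using Cons.prems(4) ys by simp
    then show "xs = []" using dist(1) by (metis last_ConsR last_in_set)
  qed
  moreover have "xs = ys'" if "xs \<noteq> []" "ys' \<noteq> []"
  proof -
    have last_eq: "last xs = last ys'" using Cons.prems(4) ys that by simp
    then have "hd xs = hd ys'" using gpath_Cons_same_hd Cons.prems(1,2) ys that by blast
    moreover have "gpath E xs" "gpath E ys'"
      using Cons.prems(1,2) ys that by (auto simp: gpath_iff_walk walk_Cons)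
    ultimately show ?thesis using Cons.IH last_eq by blast
  qed
  ultimately show ?case using ys by blast
qed

definition root_path :: "'a \<Rightarrow> 'a list" where
  "root_path y = (THE xs. gpath E xs \<and> hd xs = r \<and> last xs = y)"

lemma root_path:
  assumes "y \<in> V"
  shows "gpath E (root_path y)" "hd (root_path y) = r" "last (root_path y) = y"
proof -
  obtain xs where xs: "gpath E xs" "hd xs = r" "last xs = y"
    using gpath_exists[OF root_in_V assms] by blast
  have "\<exists>!xs. gpath E xs \<and> hd xs = r \<and> last xs = y"
  proof (rule ex1I[where a=xs])
    show "gpath E xs \<and> hd xs = r \<and> last xs = y" using xs by simp
  qed (use gpath_unique xs in simp)
  from theI'[OF this] show "gpath E (root_path y)" "hd (root_path y) = r" "last (root_path y) = y"
    unfolding root_path_def by simp_all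
qed

lemma root_path_nonempty: "y \<in> V \<Longrightarrow> root_path y \<noteq> []"
  using root_path(1) by (simp add: gpath_def)

lemma gpath_in_V: "gpath E xs \<Longrightarrow> hd xs \<in> V \<Longrightarrow> set xs \<subseteq> V"
  using walk_set[OF _ _ edges_in_V] by (simp add: gpath_iff_walk)

lemma root_path_subset_V: "y \<in> V \<Longrightarrow> set (root_path y) \<subseteq> V"
  using gpath_in_V root_path root_in_V by simp

lemma root_path_eqI:
  assumes "gpath E xs" "hd xs = r" "last xs = y"
  shows "root_path y = xs"
proof -
  have "set xs \<subseteq> V" using gpath_in_V assms(1,2) root_in_V by simp
  moreover have "xs \<noteq> []" using assms(1) by (simp add: gpath_def)
  ultimately have "y \<in> V" using assms(3) last_in_set by (metis subsetD)
  then show ?thesis using gpath_unique[OF root_path(1) assms(1)] root_path(2,3) assms(2,3) by simp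
qed

lemma root_path_root: "root_path r = [r]"
  by (rule root_path_eqI) (simp_all add: gpath_def)

lemma tree_le_iff: "x \<preceq> y \<longleftrightarrow> y \<in> V \<and> x \<in> set (root_path y)"
proof
  assume "x \<preceq> y"
  then obtain xs where xs: "gpath E xs" "hd xs = r" "last xs = y" "x \<in> set xs"
    unfolding tree_le_def by blast
  have "root_path y = xs" using root_path_eqI xs(1-3) by simp
  moreover have "set xs \<subseteq> V" using gpath_in_V xs(1,2) root_in_V by simp
  moreover have "xs \<noteq> []" using xs(1) by (simp add: gpath_def)
  ultimately show "y \<in> V \<and> x \<in> set (root_path y)" using xs(3,4) last_in_set by (metis subsetD)
next
  assume "y \<in> V \<and> x \<in> set (root_path y)"
  then show "x \<preceq> y" unfolding tree_le_def using root_path by blast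
qed

lemma tree_le_in_V: "x \<preceq> y \<Longrightarrow> x \<in> V \<and> y \<in> V"
  using tree_le_iff root_path_subset_V by blast

lemma tree_le_refl: "y \<in> V \<Longrightarrow> y \<preceq> y"
  using tree_le_iff root_path(3) root_path_nonempty by (metis last_in_set)

lemma root_tree_le: "y \<in> V \<Longrightarrow> r \<preceq> y"
  using tree_le_iff root_path(2) root_path_nonempty by (metis hd_in_set)

lemma root_path_take:
  assumes "y \<in> V" "i < length (root_path y)"
  shows "root_path (root_path y ! i) = take (Suc i) (root_path y)"
proof (rule root_path_eqI)
  show "gpath E (take (Suc i) (root_path y))"
    using root_path(1)[OF assms(1)] walk_take[of E "root_path y" "Suc i"]
    by (simp add: gpath_iff_walk)
  show "hd (take (Suc i) (root_path y)) = r" using root_path(2)[OF assms(1)] by simp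
  show "last (take (Suc i) (root_path y)) = root_path y ! i"
    using assms(2) by (simp add: take_Suc_conv_app_nth)
qed

lemma tree_leE:
  assumes "x \<preceq> y"
  obtains i where "i < length (root_path y)" "root_path y ! i = x"
    "root_path x = take (Suc i) (root_path y)"
proof -
  have y: "y \<in> V" and "x \<in> set (root_path y)" using assms tree_le_iff by auto
  then obtain i where i: "i < length (root_path y)" "root_path y ! i = x" by (metis in_set_conv_nth)
  then show ?thesis using that root_path_take[OF y i(1)] by simp
qed

lemma tree_le_trans: "x \<preceq> y \<Longrightarrow> y \<preceq> z \<Longrightarrow> x \<preceq> z"
  by (metis tree_leE tree_le_iff in_set_takeD)

lemma set_root_path: "t \<in> V \<Longrightarrow> set (root_path t) = {x. x \<preceq> t}"
  using tree_le_iff by auto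

lemma finite_tree_below: "finite {x. x \<preceq> t}"
proof (cases "t \<in> V")
  case True then show ?thesis using set_root_path by (metis List.finite_set)
next
  case False
  then have "{x. x \<preceq> t} = {}" using tree_le_in_V by blast
  then show ?thesis by simp
qed

lemma tree_le_length_less:
  assumes "x \<preceq> y" "x \<noteq> y"
  shows "length (root_path x) < length (root_path y)"
proof -
  obtain i where i: "i < length (root_path y)" "root_path x = take (Suc i) (root_path y)"
    using tree_leE[OF assms(1)] by metis
  have "Suc i \<noteq> length (root_path y)"
  proof
    assume "Suc i = length (root_path y)"
    then have "root_path x = root_path y" using i(2) by simp
    then show False using root_path(3) tree_le_in_V assms by metis
  qed
  then show ?thesis using i by simp
qed

lemma tree_le_linear:
  assumes "x \<preceq> z" "y \<preceq> z"
  shows "x \<preceq> y \<or> y \<preceq> x"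
proof -
  obtain i where i: "root_path x = take (Suc i) (root_path z)" using tree_leE[OF assms(1)] by metis
  obtain j where j: "root_path y = take (Suc j) (root_path z)" using tree_leE[OF assms(2)] by metis
  have V: "x \<in> V" "y \<in> V" using assms tree_le_in_V by auto
  have "set (root_path x) \<subseteq> set (root_path y) \<or> set (root_path y) \<subseteq> set (root_path x)"
    using i j by (metis nat_le_linear set_take_subset_set_take)
  then show ?thesis using V root_path(3) root_path_nonempty tree_le_iff by (metis last_in_set subsetD)
qed

lemma edge_tree_le:
  assumes e: "(x, y) \<in> E"
  shows "x \<preceq> y \<or> y \<preceq> x"
proof (cases "y \<in> set (root_path x)")
  case True
  then show ?thesis using e edges_in_V tree_le_iff by blast
next
  case False
  have V: "x \<in> V" "y \<in> V" using e edges_in_V by auto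
  have "walk E (root_path x @ [y])"
    using walk_append[of "root_path x" "[y]" E] root_path[OF V(1)] root_path_nonempty[OF V(1)] e
    by (simp add: gpath_iff_walk walk_def)
  moreover have "distinct (root_path x @ [y])" using False root_path(1)[OF V(1)] by (simp add: gpath_def)
  ultimately have "root_path y = root_path x @ [y]"
    using root_path_eqI root_path(2)[OF V(1)] root_path_nonempty[OF V(1)] by (simp add: gpath_iff_walk)
  then have "x \<in> set (root_path y)"
    using root_path(3)[OF V(1)] root_path_nonempty[OF V(1)] last_in_set by fastforce
  then show ?thesis using tree_le_iff V(2) by blast
qed

lemma tree_le_along_edge:
  assumes "t \<preceq> x" "(x, y) \<in> E" "y \<notin> tree_down E r t"
  shows "t \<preceq> y"
proof (cases "x \<preceq> y")
  case True then show ?thesis using tree_le_trans assms(1) by blast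
next
  case False
  then have "y \<preceq> x" using edge_tree_le assms(2) by blast
  then have "t \<preceq> y \<or> y \<preceq> t" using tree_le_linear assms(1) by blast
  then show ?thesis using assms(3) tree_le_refl tree_le_in_V unfolding tree_down_def by blast
qed

lemma tree_le_walk_last:
  assumes "walk E xs" "set xs \<inter> tree_down E r t = {}" "t \<preceq> hd xs"
  shows "t \<preceq> last xs"
  using walk_preserves[of E xs "tree_down E r t" "\<lambda>x. t \<preceq> x", OF assms] tree_le_along_edge
  by blast

lemma tree_down_root: "tree_down E r r = {}"
  unfolding tree_down_def using tree_le_iff root_path_root by auto

lemma tree_down_child:
  assumes "c \<in> V" "t \<in> V" "root_path c = root_path t @ [c]"
  shows "tree_down E r c = {x. x \<preceq> t}"
proof -
  have "distinct (root_path c)" using root_path(1)[OF assms(1)] by (simp add: gpath_def)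
  then have "set (root_path c) - {c} = set (root_path t)" using assms(3) by auto
  then show ?thesis unfolding tree_down_def using set_root_path assms(1,2) by auto
qed

lemma child_towards:
  assumes "t \<preceq> u" "t \<noteq> u"
  obtains c where "(t, c) \<in> E" "c \<preceq> u" "root_path c = root_path t @ [c]"
proof -
  obtain i where i: "i < length (root_path u)" "root_path u ! i = t"
    "root_path t = take (Suc i) (root_path u)"
    using tree_leE[OF assms(1)] by metis
  have u: "u \<in> V" using assms(1) tree_le_in_V by simp
  have si: "Suc i < length (root_path u)" using tree_le_length_less[OF assms] i(3) by simp
  define c where "c = root_path u ! Suc i"
  have "root_path c = root_path t @ [c]"
    unfolding c_def using root_path_take[OF u si] i(3) by (simp add: take_Suc_conv_app_nth[OF si])
  moreover have "(t, c) \<in> E"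
    unfolding c_def using walk_nth[OF _ si] root_path(1)[OF u] i(2) by (simp add: gpath_iff_walk)
  moreover have "c \<preceq> u" using tree_le_iff u si unfolding c_def by (simp add: nth_mem)
  ultimately show ?thesis using that by blast
qed

end

lemma gray_edge: "gray V E f \<Longrightarrow> (f k, f (Suc k)) \<in> E"
  unfolding gray_def by simp

lemma gray_in_V: "gray V E f \<Longrightarrow> f k \<in> V"
  unfolding gray_def by simp

lemma gray_inj: "gray V E f \<Longrightarrow> inj f"
  unfolding gray_def by simp

lemma gray_shift: "gray V E f \<Longrightarrow> gray V E (\<lambda>i. f (k + i))"
  unfolding gray_def inj_def by fastforce

lemma gray_eventually_avoids:
  assumes "gray V E f" "finite X"
  obtains n where "\<And>k. n \<le> k \<Longrightarrow> f k \<notin> X"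
proof -
  have "finite (f -` X)" using assms(2) gray_inj[OF assms(1)] by (simp add: finite_vimageI)
  then obtain n where "\<forall>k\<in>f -` X. k < n" using finite_nat_set_iff_bounded by blast
  then show ?thesis using that by (meson leD vimageI)
qed

lemma gpath_map_gray:
  assumes "gray V E f" "i \<le> j"
  shows "gpath E (map f [i..<Suc j])"
  using walk_map_upt[of f E, OF gray_edge[OF assms(1)] assms(2)] gray_inj[OF assms(1)]
  by (simp add: gpath_iff_walk distinct_map inj_on_subset[of f UNIV] del: upt_Suc)

lemma greach_refl: "x \<notin> X \<Longrightarrow> greach E X x x"
  unfolding greach_def by (intro exI[where x="[x]"]) (simp add: gpath_def)

lemma greach_sym:
  assumes "sym E" "greach E X x y"
  shows "greach E X y x"
proof -
  obtain xs where "gpath E xs" "hd xs = x" "last xs = y" "set xs \<inter> X = {}"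
    using assms(2) unfolding greach_def by blast
  moreover have "xs \<noteq> []" using \<open>gpath E xs\<close> by (simp add: gpath_def)
  ultimately show ?thesis
    unfolding greach_def using walk_rev[OF assms(1)]
    by (intro exI[where x="rev xs"]) (simp add: gpath_iff_walk hd_rev last_rev)
qed

lemma greach_trans:
  assumes "greach E X x y" "greach E X y z"
  shows "greach E X x z"
proof -
  obtain xs where xs: "walk E xs" "hd xs = x" "last xs = y" "set xs \<inter> X = {}"
    using assms(1) unfolding greach_def gpath_iff_walk by blast
  obtain ys where ys: "walk E ys" "hd ys = y" "last ys = z" "set ys \<inter> X = {}"
    using assms(2) unfolding greach_def gpath_iff_walk by blast
  obtain ys' where ys': "ys = y # ys'" using ys(1,2) by (cases ys) (auto simp: walk_def)
  obtain xs' where xs': "xs = xs' @ [y]"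
    using xs(1,3) append_butlast_last_id unfolding walk_def by metis
  have "walk E (xs' @ y # ys')" using walk_glue[of E xs' y ys'] xs(1) ys(1) xs' ys' by simp
  moreover have "hd (xs' @ y # ys') = x" using xs(2) xs' by (cases xs') auto
  moreover have "last (xs' @ y # ys') = z" using ys(3) ys' by (cases ys') auto
  moreover have "set (xs' @ y # ys') \<inter> X = {}" using xs(4) ys(4) xs' ys' by auto
  ultimately obtain zs where "gpath E zs" "hd zs = x" "last zs = z" "set zs \<inter> X = {}"
    using walk_to_gpath by blast
  then show ?thesis unfolding greach_def by blast
qed

lemma greach_along_gray:
  assumes "gray V E f" "i \<le> j" "\<And>k. i \<le> k \<Longrightarrow> k \<le> j \<Longrightarrow> f k \<notin> X"
  shows "greach E X (f i) (f j)"
  unfolding greach_def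
proof (intro exI conjI)
  show "gpath E (map f [i..<Suc j])" using gpath_map_gray assms(1,2) by blast
  show "hd (map f [i..<Suc j]) = f i" using assms(2) by (simp add: upt_conv_Cons del: upt_Suc)
  show "last (map f [i..<Suc j]) = f j" using assms(2) by simp
  show "set (map f [i..<Suc j]) \<inter> X = {}" using assms(3) by auto
qed

lemma ray_equiv_sym: "sym E \<Longrightarrow> ray_equiv V E f g \<Longrightarrow> ray_equiv V E g f"
  unfolding ray_equiv_def by (meson greach_sym)

lemma ray_equiv_trans:
  assumes "sym E" and g: "gray V E g" and "ray_equiv V E f g" "ray_equiv V E g h"
  shows "ray_equiv V E f h"
  unfolding ray_equiv_def
proof (intro allI impI)
  fix X assume X: "finite X \<and> X \<subseteq> V"
  obtain n1 m1 where fg: "\<forall>k\<ge>n1. f k \<notin> X" "\<forall>k\<ge>m1. g k \<notin> X" "greach E X (f n1) (g m1)"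
    using assms(3) X unfolding ray_equiv_def by meson
  obtain m2 n2 where gh: "\<forall>k\<ge>m2. g k \<notin> X" "\<forall>k\<ge>n2. h k \<notin> X" "greach E X (g m2) (h n2)"
    using assms(4) X unfolding ray_equiv_def by meson
  have "greach E X (g m1) (g m2)"
  proof (cases "m1 \<le> m2")
    case True then show ?thesis by (rule greach_along_gray[OF g]) (use fg(2) in simp)
  next
    case False
    then have "greach E X (g m2) (g m1)" by (intro greach_along_gray[OF g]) (use gh(1) in simp_all)
    then show ?thesis by (rule greach_sym[OF assms(1)])
  qed
  then have "greach E X (f n1) (h n2)" using greach_trans[OF greach_trans[OF fg(3)] gh(3)] by blast
  then show "\<exists>n m. (\<forall>k\<ge>n. f k \<notin> X) \<and> (\<forall>k\<ge>m. h k \<notin> X) \<and> greach E X (f n) (h m)"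
    using fg(1) gh(2) by blast
qed

lemma ray_equiv_shared_tail:
  assumes f: "gray V E f" and g: "gray V E g" and tail: "\<And>i. f (n + i) = g (m + i)"
  shows "ray_equiv V E f g"
  unfolding ray_equiv_def
proof (intro allI impI)
  fix X assume "finite X \<and> X \<subseteq> V"
  then obtain b c where b: "\<And>k. b \<le> k \<Longrightarrow> f k \<notin> X" and c: "\<And>k. c \<le> k \<Longrightarrow> g k \<notin> X"
    using gray_eventually_avoids f g by metis
  have "f (n + (b + c)) \<notin> X" using b by simp
  then have "greach E X (f (n + (b + c))) (g (m + (b + c)))"
    using greach_refl[of "f (n + (b + c))" X E] tail[of "b + c"] by simp
  then show "\<exists>p q. (\<forall>k\<ge>p. f k \<notin> X) \<and> (\<forall>k\<ge>q. g k \<notin> X) \<and> greach E X (f p) (g q)"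
    using b c by (intro exI[where x="n + (b + c)"] exI[where x="m + (b + c)"]) auto
qed

lemma ray_equiv_refl: "gray V E f \<Longrightarrow> ray_equiv V E f f"
  using ray_equiv_shared_tail[where n=0 and m=0 and g=f] by blast

definition ray_class :: "'a set \<Rightarrow> ('a \<times> 'a) set \<Rightarrow> (nat \<Rightarrow> 'a) \<Rightarrow> (nat \<Rightarrow> 'a) set" where
  "ray_class V E f = {g. gray V E g \<and> ray_equiv V E f g}"

lemma gends_iff: "\<omega> \<in> gends V E \<longleftrightarrow> (\<exists>f. gray V E f \<and> \<omega> = ray_class V E f)"
  unfolding gends_def ray_class_def by blast

lemma ray_class_self: "gray V E f \<Longrightarrow> f \<in> ray_class V E f"
  unfolding ray_class_def using ray_equiv_refl by blast

lemma gends_eq_ray_class: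
  assumes "sym E" "\<omega> \<in> gends V E" "f \<in> \<omega>"
  shows "\<omega> = ray_class V E f"
proof -
  obtain a where a: "gray V E a" "\<omega> = ray_class V E a" using assms(2) gends_iff by blast
  have f: "gray V E f" "ray_equiv V E a f" using assms(3) a(2) unfolding ray_class_def by auto
  show ?thesis
    unfolding a(2) ray_class_def
    using ray_equiv_trans[OF assms(1) a(1) ray_equiv_sym[OF assms(1) f(2)]]
      ray_equiv_trans[OF assms(1) f] by blast
qed

lemma gray_gpath_append:
  assumes Q: "gpath E Q" "set Q \<subseteq> V" and g: "gray V E g"
    and "(last Q, g 0) \<in> E" "set Q \<inter> range g = {}"
  shows "gray V E (\<lambda>j. if j < length Q then Q ! j else g (j - length Q))"
    (is "gray V E ?f")
  unfolding gray_def
proof (intro conjI allI)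
  show "inj ?f"
  proof (rule injI)
    fix i j assume eq: "?f i = ?f j"
    have dQ: "distinct Q" using Q(1) by (simp add: gpath_def)
    have disj: "Q ! k \<noteq> g l" if "k < length Q" for k l using that assms(5) nth_mem by blast
    consider "i < length Q" "j < length Q" | "i < length Q" "\<not> j < length Q"
      | "\<not> i < length Q" "j < length Q" | "\<not> i < length Q" "\<not> j < length Q" by blast
    then show "i = j"
    proof cases
      case 1 then show ?thesis using eq dQ by (simp add: nth_eq_iff_index_eq)
    next
      case 2 then show ?thesis using eq disj by simp
    next
      case 3 then show ?thesis using eq disj[of j "i - length Q"] by simp
    next
      case 4
      then have "i - length Q = j - length Q" using eq gray_inj[OF g] by (simp add: inj_eq)
      then show ?thesis using 4 by simp
    qed
  qed
  fix j
  show "?f j \<in> V" using Q(2) gray_in_V[OF g] by (auto simp: subset_iff)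
  consider "Suc j < length Q" | "Suc j = length Q" | "length Q \<le> j" by linarith
  then show "(?f j, ?f (Suc j)) \<in> E"
  proof cases
    case 1 then show ?thesis using walk_nth[of E Q j] Q(1) by (simp add: gpath_iff_walk)
  next
    case 2
    then have "Q ! j = last Q" using last_conv_nth[of Q] by (metis Zero_neq_Suc diff_Suc_1 list.size(3))
    then show ?thesis using 2 assms(4) by simp
  next
    case 3 then show ?thesis using gray_edge[OF g, of "j - length Q"] by (simp add: Suc_diff_le)
  qed
qed

context rooted_tree_graph
begin

lemma root_ray_root_path:
  assumes "gray V E f" "f 0 = r"
  shows "root_path (f n) = map f [0..<Suc n]"
proof (rule root_path_eqI)
  show "gpath E (map f [0..<Suc n])" using gpath_map_gray[OF assms(1)] by blast
  show "hd (map f [0..<Suc n]) = r" using assms(2) by (simp add: upt_conv_Cons del: upt_Suc)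
qed simp

lemma root_ray_tree_le_iff:
  assumes "gray V E f" "f 0 = r"
  shows "x \<preceq> f n \<longleftrightarrow> x \<in> f ` {..n}"
proof -
  have "set (map f [0..<Suc n]) = f ` {..n}" by (auto simp del: upt_Suc simp: atLeast0_atMost_Suc)
  then show ?thesis using tree_le_iff root_ray_root_path[OF assms] gray_in_V[OF assms(1)] by simp
qed

lemma root_ray_tree_le:
  assumes "gray V E f" "f 0 = r"
  shows "f i \<preceq> f j \<longleftrightarrow> i \<le> j"
proof
  assume "f i \<preceq> f j"
  then obtain k where "k \<le> j" "f i = f k" using root_ray_tree_le_iff[OF assms] by auto
  then show "i \<le> j" using gray_inj[OF assms(1)] by (metis injD)
next
  assume "i \<le> j"
  then show "f i \<preceq> f j" using root_ray_tree_le_iff[OF assms] by auto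
qed

lemma root_ray_tree_down:
  assumes "gray V E f" "f 0 = r"
  shows "tree_down E r (f n) = f ` {..<n}"
  unfolding tree_down_def
proof (intro set_eqI iffI)
  fix x assume "x \<in> {x. x \<preceq> f n \<and> x \<noteq> f n}"
  then obtain i where "i \<le> n" "x = f i" "x \<noteq> f n" using root_ray_tree_le_iff[OF assms] by auto
  then show "x \<in> f ` {..<n}" using le_neq_implies_less by blast
next
  fix x assume "x \<in> f ` {..<n}"
  then obtain i where "i < n" "x = f i" by blast
  moreover have "f i \<noteq> f n" using \<open>i < n\<close> gray_inj[OF assms(1)] by (metis injD less_irrefl)
  ultimately show "x \<in> {x. x \<preceq> f n \<and> x \<noteq> f n}" using root_ray_tree_le[OF assms] by simp
qed

lemma root_rays_meet:
  assumes f: "gray V E f" "f 0 = r" and g: "gray V E g" "g 0 = r" and "f i = g j"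
  shows "i = j" "l \<le> i \<Longrightarrow> f l = g l"
proof -
  have eq: "map f [0..<Suc i] = map g [0..<Suc j]"
    using root_ray_root_path[OF f, of i] root_ray_root_path[OF g, of j] assms(5) by simp
  then show "i = j" using map_eq_imp_length_eq by fastforce
  then show "l \<le> i \<Longrightarrow> f l = g l" using eq by (simp del: upt_Suc)
qed

lemma root_rays_branch:
  assumes f: "gray V E f" "f 0 = r" and g: "gray V E g" "g 0 = r" and "f \<noteq> g"
  obtains n where "\<And>i j. f i = g j \<Longrightarrow> i = j \<and> i < n"
proof -
  have ex: "\<exists>n. f n \<noteq> g n" using assms(5) by auto
  define n where "n = (LEAST n. f n \<noteq> g n)"
  have "f n \<noteq> g n" unfolding n_def using LeastI_ex[OF ex] .
  then have "i = j \<and> i < n" if "f i = g j" for i j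
    using root_rays_meet[OF f g that] by (metis not_less)
  then show ?thesis using that by blast
qed

lemma root_ray_unique:
  assumes f: "gray V E f" "f 0 = r" and g: "gray V E g" "g 0 = r" and "ray_equiv V E f g"
  shows "f = g"
proof (rule ccontr)
  assume "f \<noteq> g"
  then obtain n where branch: "\<And>i j. f i = g j \<Longrightarrow> i = j \<and> i < n"
    using root_rays_branch[OF f g] by blast
  define X where "X = f ` {..<n}"
  have "finite X \<and> X \<subseteq> V" unfolding X_def using gray_in_V[OF f(1)] by auto
  then obtain k m where k: "\<forall>i\<ge>k. f i \<notin> X" and "greach E X (f k) (g m)"
    using assms(5) unfolding ray_equiv_def by meson
  then obtain xs where xs: "gpath E xs" "hd xs = f k" "last xs = g m" "set xs \<inter> X = {}"
    unfolding greach_def by blast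
  have "n \<le> k" using k unfolding X_def by (meson lessThan_iff image_eqI not_le order_refl)
  then have "f n \<preceq> hd xs" using root_ray_tree_le[OF f] xs(2) by simp
  moreover have "X = tree_down E r (f n)" unfolding X_def using root_ray_tree_down[OF f] by simp
  ultimately have "f n \<preceq> g m"
    using tree_le_walk_last xs(1,4) xs(3) by (fastforce simp: gpath_iff_walk)
  then obtain j where "f n = g j" using root_ray_tree_le_iff[OF g] by blast
  then show False using branch by blast
qed

lemma root_ray_exists:
  assumes a: "gray V E a"
  shows "\<exists>f. gray V E f \<and> f 0 = r \<and> ray_equiv V E a f"
proof -
  define A where "A = {k. a k \<in> set (root_path (a 0))}"
  have fin: "finite A"
    unfolding A_def using finite_vimageI[OF List.finite_set gray_inj[OF a]] by (simp add: vimage_def)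
  have "0 \<in> A"
    unfolding A_def using tree_le_refl[OF gray_in_V[OF a]] tree_le_iff by blast
  then have "Max A \<in> A" using Max_in[OF fin] by blast
  have above_Max: "j \<notin> A" if "Max A < j" for j using Max_ge[OF fin] that by (meson not_le)
  define k where "k = Max A"
  define Q where "Q = root_path (a k)"
  have Q: "gpath E Q" "set Q \<subseteq> V" "hd Q = r" "last Q = a k" "Q \<noteq> []"
    unfolding Q_def using root_path root_path_subset_V root_path_nonempty gray_in_V[OF a] by auto
  have "a k \<preceq> a 0" using \<open>Max A \<in> A\<close> gray_in_V[OF a] tree_le_iff unfolding A_def k_def by blast
  then have "set Q \<subseteq> set (root_path (a 0))"
    unfolding Q_def using tree_le_trans set_root_path gray_in_V[OF a] by auto
  moreover have "a (Suc k + i) \<notin> set (root_path (a 0))" for i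
    using above_Max[of "Suc k + i"] unfolding A_def k_def by simp
  ultimately have disjoint: "set Q \<inter> range (\<lambda>i. a (Suc k + i)) = {}" by blast
  define f where "f j = (if j < length Q then Q ! j else a (Suc k + (j - length Q)))" for j
  have "gray V E f"
    unfolding f_def using gray_gpath_append[OF Q(1,2) gray_shift[OF a] _ disjoint] Q(4) gray_edge[OF a]
    by simp
  moreover have "f 0 = r" unfolding f_def using Q(3,5) by (simp add: hd_conv_nth)
  moreover have "f (length Q + i) = a (Suc k + i)" for i unfolding f_def by simp
  then have "ray_equiv V E a f" using ray_equiv_shared_tail[OF a \<open>gray V E f\<close>] by metis
  ultimately show ?thesis by blast
qed

lemma root_ray:
  assumes "\<omega> \<in> gends V E"
  shows "root_ray r \<omega> \<in> \<omega>" "gray V E (root_ray r \<omega>)" "root_ray r \<omega> 0 = r"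
    "\<And>g. g \<in> \<omega> \<Longrightarrow> g 0 = r \<Longrightarrow> g = root_ray r \<omega>"
proof -
  obtain a where a: "gray V E a" "\<omega> = ray_class V E a" using assms gends_iff by blast
  obtain f where f: "gray V E f" "f 0 = r" "ray_equiv V E a f" using root_ray_exists[OF a(1)] by blast
  have "f \<in> \<omega>" using f a unfolding ray_class_def by simp
  have unique: "g = f" if "g \<in> \<omega>" "g 0 = r" for g
  proof -
    have g: "gray V E g" "ray_equiv V E a g" using that a unfolding ray_class_def by auto
    have "ray_equiv V E f g" using ray_equiv_trans[OF sym_E a(1) ray_equiv_sym[OF sym_E f(3)] g(2)] .
    from root_ray_unique[OF f(1,2) g(1) that(2) this] show ?thesis by (rule sym)
  qed
  have "root_ray r \<omega> = f"
    unfolding root_ray_def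
  proof (rule the_equality)
    show "f \<in> \<omega> \<and> f 0 = r" using \<open>f \<in> \<omega>\<close> f(2) by blast
  qed (use unique in blast)
  then show "root_ray r \<omega> \<in> \<omega>" "gray V E (root_ray r \<omega>)" "root_ray r \<omega> 0 = r"
    using \<open>f \<in> \<omega>\<close> f(1,2) by simp_all
  show "\<And>g. g \<in> \<omega> \<Longrightarrow> g 0 = r \<Longrightarrow> g = root_ray r \<omega>"
    unfolding \<open>root_ray r \<omega> = f\<close> by (rule unique)
qed

lemma root_ray_inj:
  assumes "\<omega> \<in> gends V E" "\<omega>' \<in> gends V E" "root_ray r \<omega> = root_ray r \<omega>'"
  shows "\<omega> = \<omega>'"
proof -
  have "\<omega> = ray_class V E (root_ray r \<omega>)"
    using gends_eq_ray_class[OF sym_E assms(1) root_ray(1)[OF assms(1)]] .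
  moreover have "\<omega>' = ray_class V E (root_ray r \<omega>')"
    using gends_eq_ray_class[OF sym_E assms(2) root_ray(1)[OF assms(2)]] .
  ultimately show ?thesis using assms(3) by simp
qed

end

locale normal_tree_graph = connectoid_space S Fs + rooted_tree_graph V E r
  for S :: "'a set" and Fs and V :: "'a set" and E and r +
  assumes normal_tree: "normal_tree S Fs V E r"
begin

lemma V_subset_S: "V \<subseteq> S"
  using normal_tree unfolding normal_tree_def weak_normal_tree_def by blast

lemma common_lower_bound:
  assumes "cconnected S Fs C" "u \<in> C" "u \<in> V" "v \<in> C" "v \<in> V" "\<not> u \<preceq> v" "\<not> v \<preceq> u"
  obtains w where "w \<in> C" "w \<preceq> u" "w \<preceq> v"
proof -
  have "\<forall>C. cconnected S Fs C \<longrightarrow> (\<forall>u\<in>C \<inter> V. \<forall>v\<in>C \<inter> V.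
      \<not> u \<preceq> v \<and> \<not> v \<preceq> u \<longrightarrow> (\<exists>w\<in>C. w \<preceq> u \<and> w \<preceq> v))"
    using normal_tree unfolding normal_tree_def weak_normal_tree_def by (elim conjE)
  then show ?thesis using assms that by blast
qed

lemma cconnected_above_tree_down:
  assumes "u \<preceq> v"
  obtains C where "cconnected S Fs C" "u \<in> C" "v \<in> C" "C \<inter> tree_down E r u = {}"
proof -
  have "\<forall>u\<in>V. \<forall>v\<in>V. u \<preceq> v \<longrightarrow>
      (\<exists>C. cconnected S Fs C \<and> u \<in> C \<and> v \<in> C \<and> C \<inter> tree_down E r u = {})"
    using normal_tree unfolding normal_tree_def weak_normal_tree_def by (elim conjE)
  then show ?thesis using assms tree_le_in_V that by blast
qed

lemma root_ray_necklace:
  assumes "gray V E f" "f 0 = r"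
  obtains N where "necklace S Fs N" "finite (range f - N)"
  using normal_tree assms that unfolding normal_tree_def by blast

lemma tree_below_finite_subset_S: "finite {x. x \<preceq> t}" "{x. x \<preceq> t} \<subseteq> S"
  using finite_tree_below tree_le_in_V V_subset_S by auto

lemma tree_down_finite_subset_S: "finite (tree_down E r t)" "tree_down E r t \<subseteq> S"
  using tree_below_finite_subset_S finite_subset unfolding tree_down_def by auto

section \<open>The map from ends of the tree to ends of the connectoid\<close>

lemma root_ray_converges:
  assumes "gray V E f" "f 0 = r"
  obtains N where "necklace S Fs N" "converges S Fs (range f) (neck_class S Fs N)"
proof -
  obtain N where N: "necklace S Fs N" "finite (range f - N)" using root_ray_necklace[OF assms] .
  have "infinite (range f)" using infinite_image_atLeast[OF gray_inj[OF assms(1)], of 0] by simp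
  then show ?thesis using converges_neck_class[OF N(1) _ N(2)] N(1) that by blast
qed

lemma ex1_converging_end:
  assumes "\<omega> \<in> gends V E"
  shows "\<exists>!\<nu>. \<nu> \<in> cends S Fs \<and> converges S Fs (range (root_ray r \<omega>)) \<nu>"
proof -
  obtain N where N: "necklace S Fs N" "converges S Fs (range (root_ray r \<omega>)) (neck_class S Fs N)"
    using root_ray_converges root_ray(2,3)[OF assms] by metis
  have "neck_class S Fs N \<in> cends S Fs" using N(1) cends_iff by blast
  then show ?thesis using N(2) converges_unique by blast
qed

definition eta :: "(nat \<Rightarrow> 'a) set \<Rightarrow> 'a set set" where
  "eta \<omega> = (THE \<nu>. \<nu> \<in> cends S Fs \<and> converges S Fs (range (root_ray r \<omega>)) \<nu>)"

lemma eta: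
  assumes "\<omega> \<in> gends V E"
  shows "eta \<omega> \<in> cends S Fs" "converges S Fs (range (root_ray r \<omega>)) (eta \<omega>)"
  using theI'[OF ex1_converging_end[OF assms]] unfolding eta_def by simp_all

lemma eta_in_closure: "\<omega> \<in> gends V E \<Longrightarrow> in_closure S Fs V (eta \<omega>)"
  using converges_in_closure[OF eta(2)] gray_in_V[OF root_ray(2)] by blast

lemma eta_inj:
  assumes \<omega>: "\<omega> \<in> gends V E" and \<omega>': "\<omega>' \<in> gends V E" and "eta \<omega> = eta \<omega>'"
  shows "\<omega> = \<omega>'"
proof (rule ccontr)
  assume "\<omega> \<noteq> \<omega>'"
  define f where "f = root_ray r \<omega>"
  define g where "g = root_ray r \<omega>'"
  have f: "gray V E f" "f 0 = r" and g: "gray V E g" "g 0 = r"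
    unfolding f_def g_def using root_ray(2,3) \<omega> \<omega>' by auto
  have "f \<noteq> g" unfolding f_def g_def using root_ray_inj \<omega> \<omega>' \<open>\<omega> \<noteq> \<omega>'\<close> by blast
  then obtain n where branch: "\<And>i j. f i = g j \<Longrightarrow> i = j \<and> i < n"
    using root_rays_branch[OF f g] by blast
  define X where "X = f ` {..<n}"
  have X: "finite X" "X \<subseteq> S" unfolding X_def using gray_in_V[OF f(1)] V_subset_S by auto
  define K where "K = endK S Fs X (eta \<omega>)"
  have K: "K \<in> ccomponents S Fs (S - X)" unfolding K_def using endK_in_ccomponents eta(1)[OF \<omega>] X by blast
  obtain k where k: "n \<le> k" "f k \<in> K"
    using converges_frequently[OF eta(2)[OF \<omega>] gray_inj[OF root_ray(2)[OF \<omega>]] X]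
    unfolding K_def f_def by blast
  obtain l where l: "n \<le> l" "g l \<in> K"
    using converges_frequently[OF eta(2)[OF \<omega>'] gray_inj[OF root_ray(2)[OF \<omega>']] X]
    unfolding K_def g_def assms(3) by blast
  have "\<not> f k \<preceq> g l"
    using branch k(1) root_ray_tree_le_iff[OF g] by (metis imageE leD)
  moreover have "\<not> g l \<preceq> f k"
    using branch l(1) root_ray_tree_le_iff[OF f] by (metis imageE leD)
  ultimately obtain w where w: "w \<in> K" "w \<preceq> f k" "w \<preceq> g l"
    using common_lower_bound[of K] ccomponentsD[OF K] k(2) l(2) gray_in_V f(1) g(1) by metis
  obtain i j where ij: "w = f i" "w = g j"
    using w(2,3) root_ray_tree_le_iff[OF f] root_ray_tree_le_iff[OF g] by blast
  then have "i < n" using branch by metis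
  then have "w \<in> X" unfolding X_def using ij(1) by blast
  then show False using w(1) ccomponentsD[OF K] by blast
qed

section \<open>Surjectivity onto the ends in the closure of the tree\<close>

definition points_to :: "'a set set \<Rightarrow> 'a \<Rightarrow> bool" where
  "points_to \<nu> t \<longleftrightarrow> t \<in> V \<and> t \<in> endK S Fs (tree_down E r t) \<nu>"

lemma points_to_below:
  assumes \<nu>: "\<nu> \<in> cends S Fs" and t: "points_to \<nu> t"
    and u: "u \<in> endK S Fs (tree_down E r t) \<nu>" "u \<in> V"
  shows "t \<preceq> u"
proof (rule ccontr)
  assume not_tu: "\<not> t \<preceq> u"
  define K where "K = endK S Fs (tree_down E r t) \<nu>"
  have K: "K \<in> ccomponents S Fs (S - tree_down E r t)"
    unfolding K_def using endK_in_ccomponents[OF \<nu> tree_down_finite_subset_S] .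
  have tK: "t \<in> K" "t \<in> V" using t unfolding points_to_def K_def by auto
  show False
  proof (cases "u \<preceq> t")
    case True
    then have "u \<in> tree_down E r t" using not_tu tree_le_refl u(2) unfolding tree_down_def by auto
    then show False using u(1) ccomponentsD[OF K] unfolding K_def by blast
  next
    case False
    obtain w where w: "w \<in> K" "w \<preceq> t" "w \<preceq> u"
      using common_lower_bound[of K t u] ccomponentsD[OF K] tK u not_tu False unfolding K_def by blast
    then have "w \<notin> tree_down E r t" using ccomponentsD[OF K] by blast
    then have "w = t" using w(2) unfolding tree_down_def by simp
    then show False using w(3) not_tu by simp
  qed
qed

lemma points_to_root:
  assumes \<nu>: "\<nu> \<in> cends S Fs" and closure: "in_closure S Fs V \<nu>"
  shows "points_to \<nu> r"
proof -
  have K: "endK S Fs {} \<nu> \<in> ccomponents S Fs (S - {})" using endK_in_ccomponents[OF \<nu>, of "{}"] by simp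
  obtain u where u: "u \<in> endK S Fs {} \<nu>" "u \<in> V" using in_closureE[OF closure] by blast
  obtain C where C: "cconnected S Fs C" "r \<in> C" "u \<in> C"
    using cconnected_above_tree_down[OF root_tree_le[OF u(2)]] by blast
  have "C \<subseteq> endK S Fs {} \<nu>"
    using ccomponent_absorb[OF K] cconnected_subset[OF C(1)] C(1,3) u(1) by blast
  then show ?thesis unfolding points_to_def using C(2) root_in_V tree_down_root by auto
qed

text \<open>The child is taken towards a vertex \<open>u\<close> of \<open>T\<close> in \<open>K(X, \<nu>)\<close>, where \<open>X\<close> is the
  down-closure of \<open>t\<close>; condition (2) of normal trees connects the child to \<open>u\<close> outside \<open>X\<close>.\<close>

lemma points_to_child:
  assumes \<nu>: "\<nu> \<in> cends S Fs" and closure: "in_closure S Fs V \<nu>" and t: "points_to \<nu> t"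
  shows "\<exists>c. (t, c) \<in> E \<and> root_path c = root_path t @ [c] \<and> points_to \<nu> c"
proof -
  define X where "X = {x. x \<preceq> t}"
  have X: "finite X" "X \<subseteq> S" unfolding X_def using tree_below_finite_subset_S by auto
  have K: "endK S Fs X \<nu> \<in> ccomponents S Fs (S - X)" using endK_in_ccomponents[OF \<nu> X] .
  obtain u where u: "u \<in> endK S Fs X \<nu>" "u \<in> V" using in_closureE[OF closure X] by blast
  have "tree_down E r t \<subseteq> X" unfolding X_def tree_down_def by blast
  then have "endK S Fs X \<nu> \<subseteq> endK S Fs (tree_down E r t) \<nu>" using endK_antimono[OF \<nu> X] by blast
  then have tu: "t \<preceq> u" using points_to_below[OF \<nu> t] u by blast
  have "u \<notin> X" using u(1) ccomponentsD[OF K] by blast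
  then have "t \<noteq> u" unfolding X_def using tu by blast
  then obtain c where c: "(t, c) \<in> E" "c \<preceq> u" "root_path c = root_path t @ [c]"
    using child_towards[OF tu] by blast
  have c_V: "c \<in> V" "t \<in> V" using c(1) edges_in_V by auto
  have down_c: "tree_down E r c = X" unfolding X_def using tree_down_child[OF c_V c(3)] .
  obtain C where C: "cconnected S Fs C" "c \<in> C" "u \<in> C" "C \<inter> tree_down E r c = {}"
    using cconnected_above_tree_down[OF c(2)] by blast
  have "C \<subseteq> S - X" using cconnected_subset[OF C(1)] C(4) down_c by blast
  then have "C \<subseteq> endK S Fs X \<nu>" using ccomponent_absorb[OF K _ C(1)] C(3) u(1) by blast
  then have "c \<in> endK S Fs (tree_down E r c) \<nu>" using C(2) down_c by blast
  then have "points_to \<nu> c" unfolding points_to_def using c_V by blast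
  then show ?thesis using c(1,3) by blast
qed

lemma points_to_ray_exists:
  assumes \<nu>: "\<nu> \<in> cends S Fs" and closure: "in_closure S Fs V \<nu>"
  obtains t where "gray V E t" "t 0 = r" "\<And>n. points_to \<nu> (t n)"
proof -
  define P where "P x c \<longleftrightarrow> (x, c) \<in> E \<and> root_path c = root_path x @ [c] \<and> points_to \<nu> c" for x c
  define t where "t = rec_nat r (\<lambda>_ x. SOME c. P x c)"
  have t0: "t 0 = r" and tSuc: "t (Suc n) = (SOME c. P (t n) c)" for n unfolding t_def by simp_all
  have points: "points_to \<nu> (t n)" for n
  proof (induction n)
    case 0 then show ?case using points_to_root[OF \<nu> closure] t0 by simp
  next
    case (Suc n)
    then have "P (t n) (t (Suc n))" unfolding tSuc P_def by (rule someI_ex[OF points_to_child[OF \<nu> closure]])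
    then show ?case unfolding P_def by simp
  qed
  have step: "P (t n) (t (Suc n))" for n
    unfolding tSuc P_def by (rule someI_ex[OF points_to_child[OF \<nu> closure points]])
  have "length (root_path (t n)) = Suc n" for n
    by (induction n) (use t0 root_path_root step in \<open>auto simp: P_def\<close>)
  then have "inj t" by (metis injI nat.inject)
  then have "gray V E t" unfolding gray_def using points step unfolding points_to_def P_def by simp
  then show ?thesis using that t0 points by blast
qed

lemma points_to_ray_above:
  assumes \<nu>: "\<nu> \<in> cends S Fs" and t: "gray V E t" "t 0 = r" "\<And>n. points_to \<nu> (t n)"
    and Z: "finite Z" "Z \<subseteq> S" "{x. x \<preceq> t p} \<subseteq> Z" and u: "u \<in> endK S Fs Z \<nu>" "u \<in> V"
  shows "t (Suc p) \<preceq> u"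
proof -
  have "tree_down E r (t (Suc p)) = {x. x \<preceq> t p}"
    using root_ray_tree_down[OF t(1,2)] root_ray_tree_le_iff[OF t(1,2)] lessThan_Suc_atMost by auto
  then have "endK S Fs Z \<nu> \<subseteq> endK S Fs (tree_down E r (t (Suc p))) \<nu>"
    using endK_antimono[OF \<nu> Z(1,2)] Z(3) by simp
  then show ?thesis using points_to_below[OF \<nu> t(3)] u by blast
qed

text \<open>If a tree vertex \<open>u\<close> in the \<open>\<nu>\<close>-component leaves the ray above \<open>t j\<close>, a second such
  vertex \<open>u'\<close> above \<open>t (Suc j)\<close> is incomparable with \<open>u\<close>, and their common lower bound in the
  component is a late vertex of the ray.\<close>

lemma points_to_ray_branch_in_endK:
  assumes \<nu>: "\<nu> \<in> cends S Fs" "in_closure S Fs V \<nu>"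
    and t: "gray V E t" "t 0 = r" "\<And>n. points_to \<nu> (t n)"
    and Z: "finite Z" "Z \<subseteq> S" "{x. x \<preceq> t p} \<subseteq> Z"
    and u: "u \<in> endK S Fs Z \<nu>" "u \<in> V" "t j \<preceq> u" "\<not> t (Suc j) \<preceq> u" "u \<noteq> t j"
  obtains i where "p < i" "t i \<in> endK S Fs Z \<nu>"
proof -
  define Z' where "Z' = Z \<union> {x. x \<preceq> t j}"
  have Z': "finite Z'" "Z' \<subseteq> S" unfolding Z'_def using Z tree_below_finite_subset_S by auto
  obtain u' where u': "u' \<in> endK S Fs Z' \<nu>" "u' \<in> V" using in_closureE[OF \<nu>(2) Z'] by blast
  have "u' \<in> endK S Fs Z \<nu>" using endK_antimono[OF \<nu>(1) Z'] u'(1) unfolding Z'_def by blast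
  have above: "t (Suc j) \<preceq> u'" using points_to_ray_above[OF \<nu>(1) t Z'] u' unfolding Z'_def by blast
  have "\<not> u' \<preceq> u" using above u(4) tree_le_trans by blast
  moreover have "\<not> u \<preceq> u'"
  proof
    assume "u \<preceq> u'"
    then have "u \<preceq> t (Suc j)" using tree_le_linear[OF _ above] u(4) by blast
    then obtain i where "i \<le> Suc j" "u = t i" using root_ray_tree_le_iff[OF t(1,2)] by auto
    then show False using u(3-5) root_ray_tree_le[OF t(1,2)] by (metis le_Suc_eq le_antisym)
  qed
  ultimately obtain w where w: "w \<in> endK S Fs Z \<nu>" "w \<preceq> u" "w \<preceq> u'"
    using common_lower_bound[of "endK S Fs Z \<nu>" u u'] u(1,2) u' \<open>u' \<in> endK S Fs Z \<nu>\<close>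
      ccomponentsD[OF endK_in_ccomponents[OF \<nu>(1) Z(1,2)]] by blast
  have "w \<preceq> t (Suc j)" using tree_le_linear[OF w(3) above] w(2) u(4) tree_le_trans by blast
  then obtain i where i: "w = t i" using root_ray_tree_le_iff[OF t(1,2)] by auto
  have "w \<notin> Z" using w(1) endK_subset[OF \<nu>(1) Z(1,2)] by blast
  then have "p < i" using Z(3) i root_ray_tree_le[OF t(1,2)] by (metis mem_Collect_eq not_le subsetD)
  then show ?thesis using that w(1) i by blast
qed

lemma points_to_ray_meets_endK:
  assumes \<nu>: "\<nu> \<in> cends S Fs" "in_closure S Fs V \<nu>"
    and t: "gray V E t" "t 0 = r" "\<And>n. points_to \<nu> (t n)"
    and Z: "finite Z" "Z \<subseteq> S" "{x. x \<preceq> t p} \<subseteq> Z"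
  obtains i where "p < i" "t i \<in> endK S Fs Z \<nu>"
proof -
  obtain u where u: "u \<in> endK S Fs Z \<nu>" "u \<in> V" using in_closureE[OF \<nu>(2) Z(1,2)] by blast
  define J where "J = {j. t j \<preceq> u}"
  have "J \<subseteq> t -` {x. x \<preceq> u}" unfolding J_def by auto
  then have fin: "finite J"
    using finite_vimageI[OF finite_tree_below gray_inj[OF t(1)]] finite_subset by blast
  have "Suc p \<in> J" unfolding J_def using points_to_ray_above[OF \<nu>(1) t Z u] by simp
  define j where "j = Max J"
  have "Suc p \<le> j" unfolding j_def using Max_ge[OF fin \<open>Suc p \<in> J\<close>] .
  have "j \<in> J" unfolding j_def using Max_in[OF fin] \<open>Suc p \<in> J\<close> by blast
  have "Suc j \<notin> J" unfolding j_def using Max_ge[OF fin] by fastforce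
  show ?thesis
  proof (cases "u = t j")
    case True
    then show ?thesis using that[of j] \<open>Suc p \<le> j\<close> u(1) by simp
  next
    case False
    then show ?thesis
      using points_to_ray_branch_in_endK[OF \<nu> t Z u] \<open>j \<in> J\<close> \<open>Suc j \<notin> J\<close> that
      unfolding J_def by blast
  qed
qed

lemma points_to_ray_converges:
  assumes \<nu>: "\<nu> \<in> cends S Fs" "in_closure S Fs V \<nu>"
    and t: "gray V E t" "t 0 = r" "\<And>n. points_to \<nu> (t n)"
  shows "converges S Fs (range t) \<nu>"
proof -
  obtain N where N: "necklace S Fs N" "converges S Fs (range t) (neck_class S Fs N)"
    using root_ray_converges[OF t(1,2)] by blast
  have N_end: "neck_class S Fs N \<in> cends S Fs" using N(1) cends_iff by blast
  show ?thesis
    unfolding converges_def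
  proof (intro conjI allI impI)
    show "infinite (range t)" using N(2) unfolding converges_def by blast
    fix X assume "finite X \<and> X \<subseteq> S"
    then have X: "finite X" "X \<subseteq> S" by simp_all
    define K' where "K' = endK S Fs X (neck_class S Fs N)"
    have fin: "finite (range t - K')" using N(2) X unfolding converges_def K'_def by blast
    have "finite (t -` (range t - K'))" using finite_vimageI[OF fin gray_inj[OF t(1)]] .
    then obtain b where "\<forall>i\<in>t -` (range t - K'). i < b" using finite_nat_set_iff_bounded by blast
    then have b: "i < b" if "t i \<notin> K'" for i using that by blast
    have Z: "finite (X \<union> {x. x \<preceq> t b})" "X \<union> {x. x \<preceq> t b} \<subseteq> S"
      using X tree_below_finite_subset_S by auto
    obtain i where i: "b < i" "t i \<in> endK S Fs (X \<union> {x. x \<preceq> t b}) \<nu>"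
      using points_to_ray_meets_endK[OF \<nu> t Z Un_upper2] by blast
    have "t i \<in> endK S Fs X \<nu>" using endK_antimono[OF \<nu>(1) Z Un_upper1] i(2) by blast
    moreover have "t i \<in> K'" using b i(1) by (meson less_asym)
    ultimately have "endK S Fs X \<nu> = K'"
      using ccomponents_eq[OF endK_in_ccomponents[OF \<nu>(1) X] endK_in_ccomponents[OF N_end X]]
      unfolding K'_def by blast
    then show "finite (range t - endK S Fs X \<nu>)" using fin by simp
  qed
qed

lemma eta_surj:
  assumes \<nu>: "\<nu> \<in> cends S Fs" "in_closure S Fs V \<nu>"
  shows "\<exists>\<omega>\<in>gends V E. eta \<omega> = \<nu>"
proof -
  obtain t where t: "gray V E t" "t 0 = r" "\<And>n. points_to \<nu> (t n)"
    using points_to_ray_exists[OF \<nu>] by blast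
  define \<omega> where "\<omega> = ray_class V E t"
  have \<omega>: "\<omega> \<in> gends V E" unfolding \<omega>_def using t(1) gends_iff by blast
  have "root_ray r \<omega> = t" using root_ray(4)[OF \<omega> ray_class_self[OF t(1), folded \<omega>_def] t(2)] by simp
  then have "converges S Fs (range (root_ray r \<omega>)) \<nu>" using points_to_ray_converges[OF \<nu> t] by simp
  then have "eta \<omega> = \<nu>" using converges_unique[OF eta(1)[OF \<omega>] \<nu>(1) eta(2)[OF \<omega>]] by blast
  then show ?thesis using \<omega> by blast
qed

end

theorem theorem5p2:
  fixes S :: "'a set" and Fs :: "'a set set"
    and V :: "'a set" and E :: "('a \<times> 'a) set" and r :: 'a
  assumes "connectoid S Fs"
    and "normal_tree S Fs V E r"
  shows "(\<forall>\<omega>\<in>gends V E. \<exists>!\<nu>. \<nu> \<in> cends S Fs \<and>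
            converges S Fs (range (root_ray r \<omega>)) \<nu>)
       \<and> bij_betw (\<lambda>\<omega>. THE \<nu>. \<nu> \<in> cends S Fs \<and> converges S Fs (range (root_ray r \<omega>)) \<nu>)
           (gends V E) {\<nu> \<in> cends S Fs. in_closure S Fs V \<nu>}"
proof -
  have "rooted_tree V E r" using assms(2) unfolding normal_tree_def weak_normal_tree_def by blast
  then interpret normal_tree_graph S Fs V E r by unfold_locales (use assms in simp_all)
  have eta_eq: "(\<lambda>\<omega>. THE \<nu>. \<nu> \<in> cends S Fs \<and> converges S Fs (range (root_ray r \<omega>)) \<nu>) = eta"
    unfolding eta_def ..
  have "inj_on eta (gends V E)" by (rule inj_onI) (rule eta_inj)
  moreover have "eta ` gends V E = {\<nu> \<in> cends S Fs. in_closure S Fs V \<nu>}"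
  proof
    show "eta ` gends V E \<subseteq> {\<nu> \<in> cends S Fs. in_closure S Fs V \<nu>}"
      using eta(1) eta_in_closure by blast
    show "{\<nu> \<in> cends S Fs. in_closure S Fs V \<nu>} \<subseteq> eta ` gends V E"
      using eta_surj by blast
  qed
  ultimately show ?thesis unfolding eta_eq bij_betw_def using ex1_converging_end by simp
qed

end
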